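(* Let $d\geq 4$ and consider an ontological model that reproduces the quantum predictions for a quantum system with Hilbert space $\mathbb{C}^d$. Suppose that there is a constant $k$ such that \[ \omega_C(\mu_\psi,\mu_\phi) \geq k\,\omega_Q(\psi,\phi)\quad\text{for all pure states } \ket{\psi},\ket{\phi}. \] Then $k < 4/(d-1)$. If moreover $d$ is a prime power, then $k < 2/d$.
   Context: An ontological model for a quantum system with Hilbert space $\mathbb{C}^d$ consists of: a measure space $\Lambda$ of "ontic states" (with measure $\mathrm{d}\lambda$); for every pure state $\ket{\psi}$, an epistemic state $\mu_\psi$, i.e. a probability density on $\Lambda$ ($\mu_\psi(\lambda)\geq 0$, $\int_\Lambda \mu_\psi(\lambda)\,\mathrm{d}\lambda=1$); and for every projective measurement $M$ with outcomes $f$ (corresponding to orthogonal projectors $P_f$ summing to the identity), response functions $\xi_M(f|\lambda)\geq 0$ with $\sum_f \xi_M(f|\lambda)=1$ for all $\lambda$. The model reproduces the quantum predictions if $\int_\Lambda \xi_M(f|\lambda)\mu_\psi(\lambda)\,\mathrm{d}\lambda = \bra{\psi}P_f\ket{\psi}$ for all pure states $\ket{\psi}$, all projective measurements $M$ and outcomes $f$ (for a rank-one outcome $P_f=\ket{f}\bra{f}$ this is $|\braket{f|\psi}|^2$). The classical overlap of probability densities $p,q$ is $\omega_C(p,q)=\int \min\{p(x),q(x)\}\,\mathrm{d}x$. The quantum overlap of pure states is $\omega_Q(\psi,\phi)=1-\sqrt{1-|\braket{\psi|\phi}|^2}$. *)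

theory Defs
  imports "HOL-Analysis.Analysis" "HOL-Number_Theory.Prime_Powers"
begin

type_synonym 'd cvec = "complex ^ 'd"
type_synonym 'd cmat = "complex ^ 'd ^ 'd"

definition cinner :: "'d::finite cvec \<Rightarrow> 'd cvec \<Rightarrow> complex" where
  "cinner x y = (\<Sum>i\<in>UNIV. cnj (x $ i) * y $ i)"

definition pure_state :: "'d::finite cvec \<Rightarrow> bool" where
  "pure_state x \<longleftrightarrow> cinner x x = 1"

definition is_projector :: "'d::finite cmat \<Rightarrow> bool" where
  "is_projector P \<longleftrightarrow> (\<forall>i j. P $ i $ j = cnj (P $ j $ i)) \<and> P ** P = P"

text \<open>A projective measurement is a finite set of nonzero, mutually orthogonal
  projectors summing to the identity; its outcomes are identified with the projectors.\<close>
definition proj_measurement :: "'d::finite cmat set \<Rightarrow> bool" where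
  "proj_measurement Ms \<longleftrightarrow> finite Ms \<and>
     (\<forall>P\<in>Ms. is_projector P \<and> P \<noteq> 0) \<and>
     (\<forall>P\<in>Ms. \<forall>Q\<in>Ms. P \<noteq> Q \<longrightarrow> P ** Q = 0) \<and>
     sum (\<lambda>P. P) Ms = mat 1"

definition born :: "'d::finite cvec \<Rightarrow> 'd cmat \<Rightarrow> real" where
  "born psi P = Re (cinner psi (P *v psi))"

text \<open>Ontological model on the measure space (Lambda, dlambda) = M reproducing the quantum
  predictions: mu psi is a probability density for every pure state, xi Ms f is a
  (measurable) response function for every projective measurement Ms and outcome f.\<close>
definition onto_model_reproducing ::
  "'l measure \<Rightarrow> ('d::finite cvec \<Rightarrow> 'l \<Rightarrow> real) \<Rightarrow> ('d cmat set \<Rightarrow> 'd cmat \<Rightarrow> 'l \<Rightarrow> real) \<Rightarrow> bool" where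
  "onto_model_reproducing M mu xi \<longleftrightarrow>
     (\<forall>psi. pure_state psi \<longrightarrow>
        mu psi \<in> borel_measurable M \<and> (\<forall>x\<in>space M. 0 \<le> mu psi x) \<and>
        integrable M (mu psi) \<and> integral\<^sup>L M (mu psi) = 1) \<and>
     (\<forall>Ms. proj_measurement Ms \<longrightarrow>
        (\<forall>f\<in>Ms. xi Ms f \<in> borel_measurable M \<and> (\<forall>x\<in>space M. 0 \<le> xi Ms f x)) \<and>
        (\<forall>x\<in>space M. (\<Sum>f\<in>Ms. xi Ms f x) = 1)) \<and>
     (\<forall>psi Ms f. pure_state psi \<longrightarrow> proj_measurement Ms \<longrightarrow> f \<in> Ms \<longrightarrow>
        integral\<^sup>L M (\<lambda>x. xi Ms f x * mu psi x) = born psi f)"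

definition omega_C :: "'l measure \<Rightarrow> ('l \<Rightarrow> real) \<Rightarrow> ('l \<Rightarrow> real) \<Rightarrow> real" where
  "omega_C M p q = integral\<^sup>L M (\<lambda>x. min (p x) (q x))"

definition omega_Q :: "'d::finite cvec \<Rightarrow> 'd cvec \<Rightarrow> real" where
  "omega_Q psi phi = 1 - sqrt (1 - (cmod (cinner psi phi))\<^sup>2)"

end

theory Submission
  imports Defs
begin

(*
  Call three states antidistinguishable if some projective measurement has, for every outcome,
  one of the three states in which that outcome has probability zero. In a model reproducing the
  quantum predictions, the pointwise minimum of the three epistemic states then vanishes almost
  everywhere. So if psi is antidistinguishable from every pair of distinct members of a family
  phi_1, ..., phi_n, the overlaps of mu_psi with the mu_phi_i occupy almost disjoint parts of
  mu_psi, and k * (SUM i. omega_Q psi phi_i) <= (SUM i. omega_C mu_psi mu_phi_i) <= 1.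

  Antidistinguishability of psi, phi, phi' follows from a vector w orthogonal to psi with
  <phi|psi><psi|phi'> |w|^2 + <phi|w><w|phi'> = 0. For psi a basis vector, the 2^(d-1) vectors
  (1, +-1, ..., +-1)/sqrt d admit such witnesses (other basis vectors) and each has
  omega_Q = 1 - sqrt (1 - 1/d) > 1/(2d); this yields k < 4d/2^d, which is below 4/(d-1) for
  d >= 4 and below 2/d for d >= 7. For d = 4, 5, explicit families of d^2 vectors with entries
  in {+-1, +-i}, whose witnesses are checked by evaluation over the Gaussian integers, yield
  k < 2/d; and 6 is not a prime power.
*)

section \<open>Inner product and rank-one projectors\<close>

lemma cinner_add_left: "cinner (x + y) z = cinner x z + cinner y z"
  by (simp add: cinner_def distrib_right sum.distrib)

lemma cinner_add_right: "cinner x (y + z) = cinner x y + cinner x z"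
  by (simp add: cinner_def distrib_left sum.distrib)

lemma cinner_scale_left: "cinner (c *s x) y = cnj c * cinner x y"
  by (simp add: cinner_def sum_distrib_left mult_ac)

lemma cinner_scale_right: "cinner x (c *s y) = c * cinner x y"
  by (simp add: cinner_def sum_distrib_left mult_ac)

lemma cinner_commute: "cinner y x = cnj (cinner x y)"
  by (simp add: cinner_def mult.commute)

lemma cinner_zero_left: "cinner 0 y = 0"
  by (simp add: cinner_def)

lemma cinner_self_eq_norm: "cinner x x = of_real ((norm x)\<^sup>2)"
proof -
  have "(norm x)\<^sup>2 = (\<Sum>i\<in>UNIV. (cmod (x $ i))\<^sup>2)"
    by (simp add: norm_vec_def L2_set_def sum_nonneg)
  then show ?thesis
    unfolding cinner_def of_real_sum
    by (simp add: complex_norm_square mult.commute del: of_real_power)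
qed

lemma cnj_cinner_self: "cnj (cinner x x) = cinner x x"
  by (simp add: cinner_self_eq_norm)

lemma cinner_self_nonzero: "x \<noteq> 0 \<Longrightarrow> cinner x x \<noteq> 0"
  by (simp add: cinner_self_eq_norm)

lemma cinner_axis_left: "cinner (axis i 1) x = x $ i"
proof -
  have "cinner (axis i 1) x = (\<Sum>j\<in>UNIV. if j = i then x $ i else 0)"
    unfolding cinner_def axis_def by (rule sum.cong) auto
  then show ?thesis by simp
qed

lemma cinner_axis_right: "cinner x (axis i 1) = cnj (x $ i)"
  by (simp add: cinner_commute[of x] cinner_axis_left)

lemma pure_state_axis: "pure_state (axis i 1)"
  unfolding pure_state_def cinner_axis_left by (simp add: axis_def)

definition proj_onto :: "'d::finite cvec \<Rightarrow> 'd cmat" where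
  "proj_onto v = (\<chi> i j. v $ i * cnj (v $ j) / cinner v v)"

lemma proj_onto_mult_vec: "proj_onto v *v x = (cinner v x / cinner v v) *s v"
  by (simp add: proj_onto_def matrix_vector_mult_def vec_eq_iff cinner_def
      sum_distrib_left sum_divide_distrib mult_ac)

lemma proj_onto_mult:
  "proj_onto u ** proj_onto v =
     (\<chi> i j. u $ i * cnj (v $ j) * cinner u v / (cinner u u * cinner v v))"
proof -
  have "(proj_onto u ** proj_onto v) $ i $ j =
      (u $ i * cnj (v $ j) / (cinner u u * cinner v v)) * (\<Sum>k\<in>UNIV. cnj (u $ k) * v $ k)" for i j
    by (simp add: proj_onto_def matrix_matrix_mult_def sum_distrib_left)
      (simp add: divide_inverse mult_ac inverse_mult_distrib)
  then show ?thesis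
    by (simp add: vec_eq_iff cinner_def)
qed

lemma proj_onto_orthogonal: "cinner u v = 0 \<Longrightarrow> proj_onto u ** proj_onto v = 0"
  by (simp add: proj_onto_mult vec_eq_iff)

lemma proj_onto_idem: "v \<noteq> 0 \<Longrightarrow> proj_onto v ** proj_onto v = proj_onto v"
  using cinner_self_nonzero[of v] unfolding proj_onto_mult
  by (simp add: vec_eq_iff proj_onto_def power2_eq_square)

lemma proj_onto_hermitian: "proj_onto v $ i $ j = cnj (proj_onto v $ j $ i)"
  by (simp add: proj_onto_def cnj_cinner_self)

lemma trace_proj_onto: "v \<noteq> 0 \<Longrightarrow> trace (proj_onto v) = 1"
  using cinner_self_nonzero[of v]
  by (simp add: trace_def proj_onto_def cinner_def sum_divide_distrib[symmetric] mult.commute)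

lemma proj_onto_nonzero: "v \<noteq> 0 \<Longrightarrow> proj_onto v \<noteq> 0"
  using trace_proj_onto[of v] by (auto simp: trace_def)

lemma is_projector_proj_onto: "v \<noteq> 0 \<Longrightarrow> is_projector (proj_onto v)"
  unfolding is_projector_def using proj_onto_hermitian proj_onto_idem by blast

lemma born_proj_onto: "born x (proj_onto v) = (cmod (cinner v x))\<^sup>2 / (norm v)\<^sup>2"
proof -
  have "born x (proj_onto v) = Re (cinner v x / cinner v v * cnj (cinner v x))"
    by (simp add: born_def proj_onto_mult_vec cinner_scale_right cinner_commute[of v x])
  also have "cinner v x / cinner v v * cnj (cinner v x) = of_real ((cmod (cinner v x))\<^sup>2 / (norm v)\<^sup>2)"
    by (simp add: cinner_self_eq_norm complex_norm_square del: of_real_power)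
  finally show ?thesis by simp
qed

lemma born_diff: "born x (A - B) = born x A - born x B"
  by (simp add: born_def matrix_vector_mult_diff_rdistrib cinner_def
      sum_subtractf right_diff_distrib)

lemma born_mat_1: "pure_state x \<Longrightarrow> born x (mat 1) = 1"
  by (simp add: born_def pure_state_def)

lemma matrix_diff_ldistrib: "(A::'a::comm_ring_1^'n^'m) ** (B - C) = A ** B - A ** C"
  by (vector matrix_matrix_mult_def sum_subtractf[symmetric] field_simps)

lemma matrix_diff_rdistrib: "((A::'a::comm_ring_1^'n^'m) - B) ** C = A ** C - B ** C"
  by (vector matrix_matrix_mult_def sum_subtractf[symmetric] field_simps)

lemma proj_measurement_orthogonal_pair:
  fixes v v' :: "'d::finite cvec"
  assumes d: "CARD('d) \<ge> 3" and v: "v \<noteq> 0" and v': "v' \<noteq> 0" and orth: "cinner v v' = 0"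
  shows "proj_measurement {proj_onto v, proj_onto v', mat 1 - proj_onto v - proj_onto v'}"
proof -
  define P P' Q where "P = proj_onto v" and "P' = proj_onto v'" and "Q = mat 1 - P - P'"
  have PP: "P ** P = P" and P'P': "P' ** P' = P'"
    using v v' by (simp_all add: P_def P'_def proj_onto_idem)
  have PP': "P ** P' = 0" and P'P: "P' ** P = 0"
    using orth cinner_commute[of v v'] by (simp_all add: P_def P'_def proj_onto_orthogonal)
  have PQ: "P ** Q = 0" and QP: "Q ** P = 0" and P'Q: "P' ** Q = 0" and QP': "Q ** P' = 0"
    and QQ: "Q ** Q = Q"
    by (simp_all add: Q_def matrix_diff_ldistrib matrix_diff_rdistrib PP P'P' PP' P'P)
  have P0: "P \<noteq> 0" and P'0: "P' \<noteq> 0"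
    using v v' by (simp_all add: P_def P'_def proj_onto_nonzero)
  have "trace Q = of_nat CARD('d) - 2"
    using v v' by (simp add: Q_def trace_sub trace_I P_def P'_def trace_proj_onto)
  moreover have "(of_nat CARD('d) :: complex) \<noteq> 2"
    using d of_nat_eq_iff[of "CARD('d)" 2] by (auto simp del: of_nat_eq_iff)
  ultimately have Q0: "Q \<noteq> 0"
    by (auto simp: trace_def)
  \<comment> \<open>Distinct because a nonzero idempotent cannot annihilate itself.\<close>
  have distinct: "P \<noteq> P'" "P \<noteq> Q" "P' \<noteq> Q"
    using PP PP' P0 PQ P'P' P'Q P'0 by metis+
  have "Q $ i $ j = cnj (Q $ j $ i)" for i j
    by (simp add: Q_def P_def P'_def proj_onto_def mat_def cnj_cinner_self mult.commute)
  then have "is_projector Q"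
    unfolding is_projector_def using QQ by blast
  moreover have "is_projector P" "is_projector P'"
    using v v' by (simp_all add: P_def P'_def is_projector_proj_onto)
  ultimately have "proj_measurement {P, P', Q}"
    using distinct P0 P'0 Q0 PP' P'P PQ QP P'Q QP'
    by (simp add: proj_measurement_def Q_def)
  then show ?thesis
    by (simp add: P_def P'_def Q_def)
qed

section \<open>Antidistinguishable triples\<close>

lemma model_density:
  assumes "onto_model_reproducing M mu xi" "pure_state psi"
  shows "mu psi \<in> borel_measurable M" "\<And>x. x \<in> space M \<Longrightarrow> 0 \<le> mu psi x"
    "integrable M (mu psi)" "integral\<^sup>L M (mu psi) = 1"
  using assms unfolding onto_model_reproducing_def by blast+

lemma model_response:
  assumes "onto_model_reproducing M mu xi" "proj_measurement Ms" "f \<in> Ms"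
  shows "xi Ms f \<in> borel_measurable M" "\<And>x. x \<in> space M \<Longrightarrow> 0 \<le> xi Ms f x"
    "\<And>x. x \<in> space M \<Longrightarrow> (\<Sum>g\<in>Ms. xi Ms g x) = 1"
    "\<And>psi. pure_state psi \<Longrightarrow> integral\<^sup>L M (\<lambda>x. xi Ms f x * mu psi x) = born psi f"
  using assms unfolding onto_model_reproducing_def by blast+

lemma proj_measurement_nonempty:
  fixes Ms :: "'d::finite cmat set"
  assumes "proj_measurement Ms"
  shows "Ms \<noteq> {}"
proof
  assume "Ms = {}"
  then have "(mat 1 :: 'd cmat) = 0"
    using assms by (simp add: proj_measurement_def)
  then have "(mat 1 :: 'd cmat) $ i $ i = 0" for i
    by simp
  then show False
    by (simp add: mat_def)
qed

lemma model_response_le_1: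
  assumes m: "onto_model_reproducing M mu xi" and Ms: "proj_measurement Ms" and f: "f \<in> Ms"
    and x: "x \<in> space M"
  shows "xi Ms f x \<le> 1"
proof -
  have "xi Ms f x \<le> (\<Sum>g\<in>Ms. xi Ms g x)"
    by (rule member_le_sum) (use Ms f x model_response(2)[OF m Ms] in \<open>auto simp: proj_measurement_def\<close>)
  then show ?thesis
    using model_response(3)[OF m Ms f x] by simp
qed

lemma AE_response_density_eq_0:
  assumes m: "onto_model_reproducing M mu xi" and Ms: "proj_measurement Ms" and f: "f \<in> Ms"
    and z: "pure_state z" and zero: "born z f = 0"
  shows "AE x in M. xi Ms f x * mu z x = 0"
proof -
  have bounded: "norm (xi Ms f x * mu z x) \<le> norm (mu z x)" if x: "x \<in> space M" for x
    using model_response(2)[OF m Ms f x] model_response_le_1[OF m Ms f x]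
      model_density(2)[OF m z x]
    by (simp add: mult_left_le_one_le)
  have "integrable M (\<lambda>x. xi Ms f x * mu z x)"
  proof (rule Bochner_Integration.integrable_bound[OF model_density(3)[OF m z]])
    show "(\<lambda>x. xi Ms f x * mu z x) \<in> borel_measurable M"
      using model_response(1)[OF m Ms f] model_density(1)[OF m z] by measurable
  qed (use bounded in \<open>auto intro: AE_I2\<close>)
  moreover have "AE x in M. 0 \<le> xi Ms f x * mu z x"
    using model_response(2)[OF m Ms f] model_density(2)[OF m z] by (auto intro!: AE_I2)
  moreover have "integral\<^sup>L M (\<lambda>x. xi Ms f x * mu z x) = 0"
    using model_response(4)[OF m Ms f z] zero by simp
  ultimately show ?thesis
    using integral_nonneg_eq_0_iff_AE by blast
qed

definition antidistinguishable :: "'d::finite cvec \<Rightarrow> 'd cvec \<Rightarrow> 'd cvec \<Rightarrow> bool" where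
  "antidistinguishable a b c \<longleftrightarrow> (\<exists>Ms. proj_measurement Ms \<and>
     (\<forall>f\<in>Ms. born a f = 0 \<or> born b f = 0 \<or> born c f = 0))"

text \<open>Each outcome excludes one of the three states, so the common part of the three
  epistemic states is hit by no outcome at all, while the responses sum to one.\<close>
lemma antidistinguishable_AE_min_eq_0:
  assumes m: "onto_model_reproducing M mu xi" and anti: "antidistinguishable a b c"
    and p: "pure_state a" "pure_state b" "pure_state c"
  shows "AE x in M. min (mu a x) (min (mu b x) (mu c x)) = 0"
proof -
  obtain Ms where Ms: "proj_measurement Ms"
    and excl: "\<And>f. f \<in> Ms \<Longrightarrow> born a f = 0 \<or> born b f = 0 \<or> born c f = 0"
    using anti unfolding antidistinguishable_def by blast
  define m3 where "m3 x = min (mu a x) (min (mu b x) (mu c x))" for x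
  have m3_nonneg: "0 \<le> m3 x" if "x \<in> space M" for x
    using that model_density(2)[OF m] p by (simp add: m3_def)
  have "AE x in M. xi Ms f x * m3 x = 0" if f: "f \<in> Ms" for f
  proof -
    obtain z where z: "pure_state z" "born z f = 0" "\<And>x. m3 x \<le> mu z x"
      using excl[OF f] p unfolding m3_def by (metis min.cobounded1 min.cobounded2 order_trans)
    show ?thesis
      using AE_response_density_eq_0[OF m Ms f z(1,2)]
    proof (rule AE_mp, intro AE_I2 impI)
      fix x assume x: "x \<in> space M" and "xi Ms f x * mu z x = 0"
      moreover have "xi Ms f x * m3 x \<le> xi Ms f x * mu z x"
        using z(3) model_response(2)[OF m Ms f x] by (simp add: mult_left_mono)
      moreover have "0 \<le> xi Ms f x * m3 x"
        using m3_nonneg[OF x] model_response(2)[OF m Ms f x] by simp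
      ultimately show "xi Ms f x * m3 x = 0" by linarith
    qed
  qed
  then have "AE x in M. \<forall>f\<in>Ms. xi Ms f x * m3 x = 0"
    using Ms by (intro AE_finite_allI) (auto simp: proj_measurement_def)
  then have "AE x in M. m3 x = 0"
  proof (rule AE_mp, intro AE_I2 impI)
    fix x assume x: "x \<in> space M" and h: "\<forall>f\<in>Ms. xi Ms f x * m3 x = 0"
    obtain f0 where "f0 \<in> Ms" using proj_measurement_nonempty[OF Ms] by blast
    then have "m3 x = (\<Sum>f\<in>Ms. xi Ms f x * m3 x)"
      using model_response(3)[OF m Ms _ x] by (simp add: sum_distrib_right[symmetric])
    also have "\<dots> = 0" using h by (intro sum.neutral) blast
    finally show "m3 x = 0" .
  qed
  then show ?thesis by (simp add: m3_def)
qed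

lemma antidist_identity:
  fixes A B C E W :: real
  assumes "A > 0" "C > 0" "W > 0" "B \<ge> 0" "E \<ge> 0" "A * C * W\<^sup>2 = B * E"
  shows "1 - A / (A + B / W) - C / (C + E / W) = 0"
proof -
  have pos: "A + B / W > 0" "C + E / W > 0"
    using assms by (simp_all add: add_pos_nonneg)
  have "B / W * (E / W) = A * C"
    using assms by (simp add: field_simps power2_eq_square)
  then have eq: "A * (C + E / W) + C * (A + B / W) = (A + B / W) * (C + E / W)"
    by (simp add: algebra_simps)
  have "A / (A + B / W) + C / (C + E / W)
      = (A * (C + E / W) + C * (A + B / W)) / ((A + B / W) * (C + E / W))"
    using pos by (simp add: field_simps)
  also have "\<dots> = 1"
    using eq pos by simp
  finally show ?thesis
    by simp
qed

lemma cinner_combination: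
  assumes "cinner psi psi = 1" "cinner psi w = 0"
  shows "cinner (a *s psi + b *s w) (c *s psi + e *s w) = cnj a * c + cnj b * e * cinner w w"
  using assms cinner_commute[of psi w]
  by (simp add: cinner_add_left cinner_add_right cinner_scale_left cinner_scale_right)

lemma norm_combination_squared:
  assumes "cinner psi psi = 1" "cinner psi w = 0" and W: "W = (norm w)\<^sup>2" "W > 0"
  shows "(norm (a *s psi + (b / of_real W) *s w))\<^sup>2 = (cmod a)\<^sup>2 + (cmod b)\<^sup>2 / W"
proof -
  have "cinner w w = of_real W"
    using W(1) by (simp add: cinner_self_eq_norm)
  then have "cinner (a *s psi + (b / of_real W) *s w) (a *s psi + (b / of_real W) *s w)
      = cnj a * a + cnj (b / of_real W) * (b / of_real W) * of_real W"
    using assms(1,2) by (simp add: cinner_combination)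
  also have "\<dots> = cnj a * a + cnj b / of_real W * b"
    using W(2) by (simp add: field_simps)
  also have "\<dots> = of_real ((cmod a)\<^sup>2 + (cmod b)\<^sup>2 / W)"
    by (simp add: complex_norm_square mult.commute del: of_real_power)
  finally show ?thesis
    unfolding cinner_self_eq_norm of_real_eq_iff .
qed

lemma antidistinguishable_if_orthogonal_pair:
  fixes psi phi phi' v v' :: "'d::finite cvec"
  assumes d: "CARD('d) \<ge> 3" and psi: "pure_state psi"
    and v: "v \<noteq> 0" "v' \<noteq> 0" "cinner v v' = 0"
    and excl: "cinner v phi' = 0" "cinner v' phi = 0"
    and span: "(cmod (cinner v psi))\<^sup>2 / (norm v)\<^sup>2 + (cmod (cinner v' psi))\<^sup>2 / (norm v')\<^sup>2 = 1"
  shows "antidistinguishable psi phi phi'"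
proof -
  have "born psi (mat 1 - proj_onto v - proj_onto v') = 0"
    using span by (simp add: born_diff born_mat_1[OF psi] born_proj_onto)
  then show ?thesis
    unfolding antidistinguishable_def
    using proj_measurement_orthogonal_pair[OF d v]
    by (auto simp: born_proj_onto excl)
qed

text \<open>The measurement is built from the projectors onto
  \<open>v = \<langle>psi|phi\<rangle> psi + \<langle>w|phi\<rangle> w / \<parallel>w\<parallel>\<^sup>2\<close> and
  \<open>v' = \<langle>psi|phi'\<rangle> psi + \<langle>w|phi'\<rangle> w / \<parallel>w\<parallel>\<^sup>2\<close> and the complement of their span;
  the hypothesis on \<open>w\<close> says exactly that \<open>v \<bottom> phi'\<close>, \<open>v' \<bottom> phi\<close>, \<open>v \<bottom> v'\<close> and that
  \<open>psi\<close> lies in the span of \<open>v\<close> and \<open>v'\<close>.\<close>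
lemma antidistinguishable_if_witness:
  fixes psi phi phi' w :: "'d::finite cvec"
  assumes d: "CARD('d) \<ge> 3" and psi: "pure_state psi"
    and w: "w \<noteq> 0" "cinner psi w = 0"
    and a0: "cinner psi phi \<noteq> 0" and c0: "cinner psi phi' \<noteq> 0"
    and witness: "cinner phi psi * cinner psi phi' * cinner w w + cinner phi w * cinner w phi' = 0"
  shows "antidistinguishable psi phi phi'"
proof -
  define W where "W = (norm w)\<^sup>2"
  have W: "W > 0" and ww: "cinner w w = of_real W"
    using w by (simp_all add: W_def cinner_self_eq_norm)
  have pp: "cinner psi psi = 1"
    using psi by (simp add: pure_state_def)
  define a b c e where "a = cinner psi phi" and "b = cinner w phi"
    and "c = cinner psi phi'" and "e = cinner w phi'"
  have crit: "cnj a * c * of_real W + cnj b * e = 0"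
    using witness ww by (simp add: a_def b_def c_def e_def cinner_commute[of psi phi] cinner_commute[of w phi])
  define v v' where "v = a *s psi + (b / of_real W) *s w"
    and "v' = c *s psi + (e / of_real W) *s w"
  have cinner_v: "cinner v y = cnj a * cinner psi y + cnj b / of_real W * cinner w y" for y
    by (simp add: v_def cinner_add_left cinner_scale_left)
  have cinner_v': "cinner v' y = cnj c * cinner psi y + cnj e / of_real W * cinner w y" for y
    by (simp add: v'_def cinner_add_left cinner_scale_left)
  have "cinner v phi' = (cnj a * c * of_real W + cnj b * e) / of_real W"
    using W by (simp add: cinner_v c_def[symmetric] e_def[symmetric] field_simps)
  then have v_phi': "cinner v phi' = 0"
    using crit by simp
  have "cinner v' phi = cnj (cnj a * c * of_real W + cnj b * e) / of_real W"
    using W by (simp add: cinner_v' a_def[symmetric] b_def[symmetric] field_simps)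
  then have v'_phi: "cinner v' phi = 0"
    using crit by simp
  have "cinner v v' = (cnj a * c * of_real W + cnj b * e) / of_real W"
    using W pp w(2) by (simp add: v_def v'_def cinner_combination ww field_simps)
  then have v_v': "cinner v v' = 0"
    using crit by simp
  have v_psi: "cinner v psi = cnj a" and v'_psi: "cinner v' psi = cnj c"
    using w(2) cinner_commute[of psi w] by (simp_all add: cinner_v cinner_v' pp)
  have v0: "v \<noteq> 0" and v'0: "v' \<noteq> 0"
    using v_psi v'_psi a0 c0 by (auto simp: a_def c_def cinner_zero_left)
  have "(norm v)\<^sup>2 = (cmod a)\<^sup>2 + (cmod b)\<^sup>2 / W" and "(norm v')\<^sup>2 = (cmod c)\<^sup>2 + (cmod e)\<^sup>2 / W"
    unfolding v_def v'_def using norm_combination_squared[OF pp w(2) W_def W] by blast+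
  moreover have "(cmod a)\<^sup>2 * (cmod c)\<^sup>2 * W\<^sup>2 = (cmod b)\<^sup>2 * (cmod e)\<^sup>2"
  proof -
    have "cmod (cnj a * c * of_real W) = cmod (cnj b * e)"
      using crit by (metis add_eq_0_iff norm_minus_cancel)
    then have "cmod a * cmod c * W = cmod b * cmod e"
      using W by (simp add: norm_mult)
    then show ?thesis
      by (metis power_mult_distrib)
  qed
  ultimately have "(cmod (cinner v psi))\<^sup>2 / (norm v)\<^sup>2 + (cmod (cinner v' psi))\<^sup>2 / (norm v')\<^sup>2 = 1"
    using a0 c0 W antidist_identity[of "(cmod a)\<^sup>2" "(cmod c)\<^sup>2" W "(cmod b)\<^sup>2" "(cmod e)\<^sup>2"]
    by (simp add: v_psi v'_psi a_def c_def)
  then show ?thesis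
    by (rule antidistinguishable_if_orthogonal_pair[OF d psi v0 v'0 v_v' v_phi' v'_phi])
qed

section \<open>Families antidistinguishable in pairs with a fixed state\<close>

lemma sum_min_le_if_pairwise_min_eq_0:
  fixes a :: real and b :: "'i \<Rightarrow> real"
  assumes fin: "finite S" and a: "a \<ge> 0" and b: "\<And>i. i \<in> S \<Longrightarrow> b i \<ge> 0"
    and zero: "\<And>i j. i \<in> S \<Longrightarrow> j \<in> S \<Longrightarrow> i \<noteq> j \<Longrightarrow> min a (min (b i) (b j)) = 0"
  shows "(\<Sum>i\<in>S. min a (b i)) \<le> a"
proof (cases "\<forall>i\<in>S. min a (b i) = 0")
  case True
  then show ?thesis using a by simp
next
  case False
  then obtain i0 where i0: "i0 \<in> S" "min a (b i0) \<noteq> 0" by blast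
  then have pos: "a > 0" "b i0 > 0"
    using a b[OF i0(1)] by (auto simp: min_def split: if_splits)
  have "min a (b j) = 0" if "j \<in> S - {i0}" for j
    using zero[OF i0(1), of j] that pos a b[of j] by (auto simp: min_def split: if_splits)
  then have "(\<Sum>i\<in>S. min a (b i)) = min a (b i0)"
    using fin i0(1) by (simp add: sum.remove)
  then show ?thesis by simp
qed

lemma overlap_sum_le_1:
  fixes psi :: "'d::finite cvec" and phi :: "'i \<Rightarrow> 'd cvec"
    and mu :: "'d cvec \<Rightarrow> 'l \<Rightarrow> real"
  assumes m: "onto_model_reproducing M mu xi" and fin: "finite S" and p: "pure_state psi"
    and ph: "\<And>i. i \<in> S \<Longrightarrow> pure_state (phi i)"
    and anti: "\<And>i j. i \<in> S \<Longrightarrow> j \<in> S \<Longrightarrow> i \<noteq> j \<Longrightarrow> antidistinguishable psi (phi i) (phi j)"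
  shows "(\<Sum>i\<in>S. omega_C M (mu psi) (mu (phi i))) \<le> 1"
proof -
  have "AE x in M. \<forall>i\<in>S. \<forall>j\<in>S. i \<noteq> j \<longrightarrow> min (mu psi x) (min (mu (phi i) x) (mu (phi j) x)) = 0"
    using fin by (intro AE_finite_allI) (auto intro: antidistinguishable_AE_min_eq_0[OF m anti p ph ph])
  then have pointwise: "AE x in M. (\<Sum>i\<in>S. min (mu psi x) (mu (phi i) x)) \<le> mu psi x"
  proof (rule AE_mp, intro AE_I2 impI)
    fix x assume "x \<in> space M"
      and "\<forall>i\<in>S. \<forall>j\<in>S. i \<noteq> j \<longrightarrow> min (mu psi x) (min (mu (phi i) x) (mu (phi j) x)) = 0"
    then show "(\<Sum>i\<in>S. min (mu psi x) (mu (phi i) x)) \<le> mu psi x"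
      using model_density(2)[OF m p] model_density(2)[OF m ph]
      by (intro sum_min_le_if_pairwise_min_eq_0[OF fin]) auto
  qed
  have integrable: "integrable M (\<lambda>x. min (mu psi x) (mu (phi i) x))" if i: "i \<in> S" for i
  proof (rule Bochner_Integration.integrable_bound[OF model_density(3)[OF m p]])
    show "(\<lambda>x. min (mu psi x) (mu (phi i) x)) \<in> borel_measurable M"
      using model_density(1)[OF m p] model_density(1)[OF m ph[OF i]] by measurable
    show "AE x in M. norm (min (mu psi x) (mu (phi i) x)) \<le> norm (mu psi x)"
      using model_density(2)[OF m p] model_density(2)[OF m ph[OF i]] by (auto intro!: AE_I2)
  qed
  have "(\<Sum>i\<in>S. omega_C M (mu psi) (mu (phi i)))
      = integral\<^sup>L M (\<lambda>x. \<Sum>i\<in>S. min (mu psi x) (mu (phi i) x))"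
    unfolding omega_C_def using integrable by (simp add: Bochner_Integration.integral_sum)
  also have "\<dots> \<le> integral\<^sup>L M (mu psi)"
    using integrable pointwise model_density(3)[OF m p] by (intro integral_mono_AE) auto
  also have "\<dots> = 1"
    using model_density(4)[OF m p] .
  finally show ?thesis .
qed

lemma k_omega_Q_sum_le_1:
  fixes psi :: "'d::finite cvec" and phi :: "'i \<Rightarrow> 'd cvec"
    and mu :: "'d cvec \<Rightarrow> 'l \<Rightarrow> real"
  assumes m: "onto_model_reproducing M mu xi" and fin: "finite S" and p: "pure_state psi"
    and ph: "\<And>i. i \<in> S \<Longrightarrow> pure_state (phi i)"
    and anti: "\<And>i j. i \<in> S \<Longrightarrow> j \<in> S \<Longrightarrow> i \<noteq> j \<Longrightarrow> antidistinguishable psi (phi i) (phi j)"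
    and bound: "\<And>psi phi. pure_state psi \<Longrightarrow> pure_state phi \<Longrightarrow>
                  omega_C M (mu psi) (mu phi) \<ge> k * omega_Q psi phi"
  shows "k * (\<Sum>i\<in>S. omega_Q psi (phi i)) \<le> 1"
proof -
  have "k * (\<Sum>i\<in>S. omega_Q psi (phi i)) \<le> (\<Sum>i\<in>S. omega_C M (mu psi) (mu (phi i)))"
    unfolding sum_distrib_left using bound[OF p ph] by (rule sum_mono)
  also have "\<dots> \<le> 1"
    by (rule overlap_sum_le_1[OF m fin p ph anti])
  finally show ?thesis .
qed

lemma one_minus_sqrt_one_minus_gt:
  fixes x :: real
  assumes "0 < x" "x \<le> 1"
  shows "x / 2 < 1 - sqrt (1 - x)"
proof -
  have "sqrt (1 - x) < sqrt ((1 - x / 2)\<^sup>2)"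
    using assms by (intro real_sqrt_less_mono) (simp add: power2_eq_square algebra_simps)
  also have "\<dots> = 1 - x / 2"
    using assms by simp
  finally show ?thesis by simp
qed

text \<open>What a family of \<open>n\<close> states \<open>phi i\<close> with \<open>|\<langle>psi|phi i\<rangle>|\<^sup>2 = 1/d\<close> yields.\<close>
lemma k_less_of_family_size:
  fixes k n d :: real
  assumes kn: "k * (n * (1 - sqrt (1 - 1 / d))) \<le> 1" and d: "d \<ge> 1" and n: "n > 0"
  shows "k < 2 * d / n"
proof -
  have "n * (1 / d / 2) < n * (1 - sqrt (1 - 1 / d))"
    using one_minus_sqrt_one_minus_gt[of "1 / d"] d n by (intro mult_strict_left_mono) auto
  then have "n / (2 * d) < n * (1 - sqrt (1 - 1 / d))"
    by simp
  moreover have "n / (2 * d) > 0"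
    using d n by simp
  ultimately have "k * (n / (2 * d)) < 1"
  proof (cases "k \<le> 0")
    case True
    with \<open>n / (2 * d) > 0\<close> have "k * (n / (2 * d)) \<le> 0"
      by (intro mult_nonpos_nonneg) auto
    then show ?thesis by simp
  next
    case False
    with \<open>n / (2 * d) < _\<close> have "k * (n / (2 * d)) < k * (n * (1 - sqrt (1 - 1 / d)))"
      by (intro mult_strict_left_mono) auto
    with kn show ?thesis by simp
  qed
  then show ?thesis
    using d n by (simp add: field_simps)
qed

section \<open>Sign vectors\<close>

definition sign_vec :: "'d::finite set \<Rightarrow> 'd cvec" where
  "sign_vec A = (\<chi> i. of_real ((if i \<in> A then -1 else 1) / sqrt (real CARD('d))))"

lemma pure_state_sign_vec: "pure_state (sign_vec (A :: 'd::finite set))"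
proof -
  have "cnj (sign_vec A $ i) * sign_vec A $ i = of_real (1 / real CARD('d))" for i :: 'd
  proof -
    define r where "r = (if i \<in> A then -1 else 1) / sqrt (real CARD('d))"
    have "r * r = 1 / real CARD('d)"
      by (simp add: r_def)
    then show ?thesis
      by (simp add: sign_vec_def r_def[symmetric] flip: of_real_mult)
  qed
  then show ?thesis
    by (simp add: pure_state_def cinner_def)
qed

lemma sign_vecs_antidistinguishable:
  fixes A B :: "'d::finite set"
  assumes d: "CARD('d) \<ge> 3" and A: "i0 \<notin> A" and B: "i0 \<notin> B" and q: "(q \<in> A) \<noteq> (q \<in> B)"
  shows "antidistinguishable (axis i0 1) (sign_vec A) (sign_vec B)"
proof (rule antidistinguishable_if_witness[OF d _ _])
  show "pure_state (axis i0 1 :: 'd cvec)"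
    by (rule pure_state_axis)
  show "axis q 1 \<noteq> (0 :: 'd cvec)"
    by simp
  show "cinner (axis i0 1) (axis q 1 :: 'd cvec) = 0"
    unfolding cinner_axis_left using A B q by (auto simp: axis_def)
  show "cinner (axis i0 1) (sign_vec A) \<noteq> 0" "cinner (axis i0 1) (sign_vec B) \<noteq> 0"
    using A B by (simp_all add: cinner_axis_left sign_vec_def)
  show "cinner (sign_vec A) (axis i0 1) * cinner (axis i0 1) (sign_vec B) * cinner (axis q 1) (axis q 1)
      + cinner (sign_vec A) (axis q 1) * cinner (axis q 1) (sign_vec B) = 0"
    unfolding cinner_axis_left cinner_axis_right
    using A B q by (simp add: sign_vec_def flip: of_real_mult of_real_add)
qed

lemma sign_family_k_bound:
  fixes M :: "'l measure" and mu :: "'d::finite cvec \<Rightarrow> 'l \<Rightarrow> real" and k :: real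
  assumes m: "onto_model_reproducing M mu xi" and d: "CARD('d) \<ge> 3"
    and bound: "\<And>psi phi. pure_state psi \<Longrightarrow> pure_state phi \<Longrightarrow>
                  omega_C M (mu psi) (mu phi) \<ge> k * omega_Q psi phi"
  shows "k < 4 * real CARD('d) / 2 ^ CARD('d)"
proof -
  fix i0 :: 'd
  define S where "S = Pow (UNIV - {i0})"
  have "k * (\<Sum>A\<in>S. omega_Q (axis i0 1) (sign_vec A)) \<le> 1"
  proof (rule k_omega_Q_sum_le_1[OF m _ _ pure_state_sign_vec _ bound])
    show "finite S" "pure_state (axis i0 1 :: 'd cvec)"
      by (simp_all add: S_def pure_state_axis)
    fix A B assume "A \<in> S" "B \<in> S" "A \<noteq> B"
    then obtain q where "(q \<in> A) \<noteq> (q \<in> B)" and "i0 \<notin> A" "i0 \<notin> B"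
      by (auto simp: S_def)
    then show "antidistinguishable (axis i0 1) (sign_vec A) (sign_vec B)"
      using sign_vecs_antidistinguishable[OF d] by blast
  qed
  moreover have "omega_Q (axis i0 1) (sign_vec A) = 1 - sqrt (1 - 1 / real CARD('d))" if "A \<in> S" for A
    using that by (simp add: S_def omega_Q_def cinner_axis_left sign_vec_def power_divide norm_divide)
  moreover have "card S = 2 ^ (CARD('d) - 1)"
    by (simp add: S_def card_Pow card_Diff_singleton)
  ultimately have "k * (2 ^ (CARD('d) - 1) * (1 - sqrt (1 - 1 / real CARD('d)))) \<le> 1"
    by simp
  then have "k < 2 * real CARD('d) / 2 ^ (CARD('d) - 1)"
    using d by (intro k_less_of_family_size) auto
  also have "\<dots> = 4 * real CARD('d) / 2 ^ CARD('d)"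
    using d by (simp add: power_eq_if[of _ "CARD('d)"])
  finally show ?thesis .
qed

section \<open>Gaussian-integer families\<close>

text \<open>Gaussian integers \<open>a + b i\<close> are represented as pairs \<open>(a, b)\<close>, so that the certificates
  below can be checked by evaluation.\<close>
definition complex_of_gauss :: "int \<times> int \<Rightarrow> complex" where
  "complex_of_gauss z = Complex (of_int (fst z)) (of_int (snd z))"

definition gauss_add :: "int \<times> int \<Rightarrow> int \<times> int \<Rightarrow> int \<times> int" where
  "gauss_add x y = (fst x + fst y, snd x + snd y)"

definition gauss_mult :: "int \<times> int \<Rightarrow> int \<times> int \<Rightarrow> int \<times> int" where
  "gauss_mult x y = (fst x * fst y - snd x * snd y, fst x * snd y + snd x * fst y)"

definition gauss_cnj :: "int \<times> int \<Rightarrow> int \<times> int" where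
  "gauss_cnj x = (fst x, - snd x)"

fun gauss_inner :: "(int \<times> int) list \<Rightarrow> (int \<times> int) list \<Rightarrow> int \<times> int" where
  "gauss_inner (x # xs) (y # ys) = gauss_add (gauss_mult (gauss_cnj x) y) (gauss_inner xs ys)"
| "gauss_inner _ _ = (0, 0)"

lemma complex_of_gauss_add: "complex_of_gauss (gauss_add x y) = complex_of_gauss x + complex_of_gauss y"
  by (simp add: complex_of_gauss_def gauss_add_def complex_eq_iff)

lemma complex_of_gauss_mult: "complex_of_gauss (gauss_mult x y) = complex_of_gauss x * complex_of_gauss y"
  by (simp add: complex_of_gauss_def gauss_mult_def complex_eq_iff)

lemma complex_of_gauss_cnj: "complex_of_gauss (gauss_cnj x) = cnj (complex_of_gauss x)"
  by (simp add: complex_of_gauss_def gauss_cnj_def complex_eq_iff)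

lemma complex_of_gauss_of_int: "complex_of_gauss (a, 0) = of_int a"
  by (simp add: complex_of_gauss_def complex_eq_iff)

lemma complex_of_gauss_eq_0_iff: "complex_of_gauss z = 0 \<longleftrightarrow> z = (0, 0)"
  by (cases z) (simp add: complex_of_gauss_def complex_eq_iff)

lemma complex_of_gauss_inner:
  "length xs = length ys \<Longrightarrow>
   complex_of_gauss (gauss_inner xs ys) =
     (\<Sum>n<length xs. cnj (complex_of_gauss (xs ! n)) * complex_of_gauss (ys ! n))"
proof (induction xs arbitrary: ys)
  case Nil
  then show ?case by (simp add: complex_of_gauss_of_int)
next
  case (Cons x xs)
  then obtain y ys' where "ys = y # ys'" "length xs = length ys'"
    by (cases ys) auto
  with Cons.IH show ?case
    by (simp add: complex_of_gauss_add complex_of_gauss_mult complex_of_gauss_cnj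
        sum.lessThan_Suc_shift del: sum.lessThan_Suc)
qed

definition list_coord :: "nat \<Rightarrow> 'd::finite" where
  "list_coord = (SOME h. bij_betw h {..<CARD('d)} UNIV)"

lemma bij_betw_list_coord: "bij_betw (list_coord :: nat \<Rightarrow> 'd::finite) {..<CARD('d)} UNIV"
proof -
  obtain h :: "nat \<Rightarrow> 'd" where "bij_betw h {..<CARD('d)} UNIV"
    using ex_bij_betw_nat_finite[of "UNIV :: 'd set"] by (auto simp: lessThan_atLeast0)
  then show ?thesis
    unfolding list_coord_def by (rule someI[where P = "\<lambda>h. bij_betw h {..<CARD('d)} UNIV"])
qed

definition vec_of_list :: "complex list \<Rightarrow> 'd::finite cvec" where
  "vec_of_list xs = (\<chi> j. xs ! inv_into {..<CARD('d)} list_coord j)"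

lemma vec_of_list_nth: "n < CARD('d) \<Longrightarrow> vec_of_list xs $ (list_coord n :: 'd::finite) = xs ! n"
  using bij_betw_list_coord[where 'd = 'd]
  by (simp add: vec_of_list_def bij_betw_def inv_into_f_f)

lemma cinner_vec_of_list:
  "cinner (vec_of_list xs :: 'd::finite cvec) (vec_of_list ys) = (\<Sum>n<CARD('d). cnj (xs ! n) * ys ! n)"
proof -
  have "(\<Sum>n<CARD('d). cnj (xs ! n) * ys ! n)
      = (\<Sum>n<CARD('d). cnj ((vec_of_list xs :: 'd cvec) $ list_coord n) * (vec_of_list ys :: 'd cvec) $ list_coord n)"
    by (simp add: vec_of_list_nth)
  also have "\<dots> = cinner (vec_of_list xs :: 'd cvec) (vec_of_list ys)"
    unfolding cinner_def by (rule sum.reindex_bij_betw[OF bij_betw_list_coord])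
  finally show ?thesis ..
qed

definition gauss_vec :: "(int \<times> int) list \<Rightarrow> 'd::finite cvec" where
  "gauss_vec G = vec_of_list (map complex_of_gauss G)"

lemma gauss_vec_nth:
  "length G = CARD('d) \<Longrightarrow> n < CARD('d) \<Longrightarrow>
   gauss_vec G $ (list_coord n :: 'd::finite) = complex_of_gauss (G ! n)"
  by (simp add: gauss_vec_def vec_of_list_nth)

lemma cinner_gauss_vec:
  "length G = CARD('d) \<Longrightarrow> length H = CARD('d) \<Longrightarrow>
   cinner (gauss_vec G :: 'd::finite cvec) (gauss_vec H) = complex_of_gauss (gauss_inner G H)"
  by (simp add: gauss_vec_def cinner_vec_of_list complex_of_gauss_inner)

text \<open>For \<open>psi\<close> the first basis vector, \<open>phi = G / \<parallel>G\<parallel>\<close>, \<open>phi' = G' / \<parallel>G'\<parallel>\<close> and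
  \<open>w = H\<close>, this is \<open>\<parallel>G\<parallel> \<parallel>G'\<parallel>\<close> times the witness expression of
  \<open>antidistinguishable_if_witness\<close>.\<close>
definition gauss_witness_defect ::
  "(int \<times> int) list \<Rightarrow> (int \<times> int) list \<Rightarrow> (int \<times> int) list \<Rightarrow> int \<times> int" where
  "gauss_witness_defect G G' H =
     gauss_add (gauss_mult (gauss_mult (gauss_cnj (G ! 0)) (G' ! 0)) (gauss_inner H H))
       (gauss_mult (gauss_inner G H) (gauss_inner H G'))"

definition gauss_family_certificate ::
  "nat \<Rightarrow> int \<Rightarrow> (int \<times> int) list list \<Rightarrow> (int \<times> int) list list list \<Rightarrow> bool" where
  "gauss_family_certificate N D L W \<longleftrightarrow>
     list_all (\<lambda>G. length G = N \<and> G ! 0 = (1, 0) \<and> gauss_inner G G = (D, 0)) L \<and>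
     list_all (\<lambda>i. list_all (\<lambda>j. i = j \<or>
        (length (W ! i ! j) = N \<and> W ! i ! j ! 0 = (0, 0) \<and> list_ex (\<lambda>z. z \<noteq> (0, 0)) (W ! i ! j) \<and>
         gauss_witness_defect (L ! i) (L ! j) (W ! i ! j) = (0, 0))) [0..<length L]) [0..<length L]"

lemma gauss_family_certificateD:
  assumes "gauss_family_certificate N D L W"
  shows "\<And>i. i < length L \<Longrightarrow> length (L ! i) = N \<and> L ! i ! 0 = (1, 0) \<and> gauss_inner (L ! i) (L ! i) = (D, 0)"
    and "\<And>i j. i < length L \<Longrightarrow> j < length L \<Longrightarrow> i \<noteq> j \<Longrightarrow>
      length (W ! i ! j) = N \<and> W ! i ! j ! 0 = (0, 0) \<and> (\<exists>z\<in>set (W ! i ! j). z \<noteq> (0, 0)) \<and>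
      gauss_witness_defect (L ! i) (L ! j) (W ! i ! j) = (0, 0)"
  using assms by (auto simp: gauss_family_certificate_def list_all_length list_ex_iff)

lemma gauss_vec_nonzero:
  assumes "length H = CARD('d)" "z \<in> set H" "z \<noteq> (0, 0)"
  shows "(gauss_vec H :: 'd::finite cvec) \<noteq> 0"
proof -
  obtain n where "n < CARD('d)" "H ! n = z"
    using assms by (auto simp: in_set_conv_nth)
  then have "(gauss_vec H :: 'd cvec) $ list_coord n \<noteq> 0"
    using assms by (simp add: gauss_vec_nth complex_of_gauss_eq_0_iff)
  then show ?thesis by auto
qed

lemma cinner_axis_scaled_gauss_vec:
  assumes "length G = CARD('d)" "G ! 0 = (1, 0)"
  shows "cinner (axis (list_coord 0) 1) (c *s gauss_vec G :: 'd::finite cvec) = c"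
  using assms by (simp add: cinner_scale_right cinner_axis_left gauss_vec_nth complex_of_gauss_of_int)

lemma gauss_vecs_antidistinguishable:
  fixes G G' H :: "(int \<times> int) list"
  assumes d: "CARD('d) \<ge> 3" and s: "s > 0"
    and G: "length G = CARD('d)" "G ! 0 = (1, 0)" and G': "length G' = CARD('d)" "G' ! 0 = (1, 0)"
    and H: "length H = CARD('d)" "H ! 0 = (0, 0)" "\<exists>z\<in>set H. z \<noteq> (0, 0)"
    and defect: "gauss_witness_defect G G' H = (0, 0)"
  shows "antidistinguishable (axis (list_coord 0) 1 :: 'd::finite cvec)
           ((1 / of_real s) *s gauss_vec G) ((1 / of_real s) *s gauss_vec G')"
proof (rule antidistinguishable_if_witness[OF d pure_state_axis])
  define psi phi phi' :: "'d cvec" where "psi = axis (list_coord 0) 1"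
    and "phi = (1 / of_real s) *s gauss_vec G" and "phi' = (1 / of_real s) *s gauss_vec G'"
  define w :: "'d cvec" where "w = gauss_vec H"
  show "w \<noteq> 0"
    using H(1,3) gauss_vec_nonzero unfolding w_def by blast
  show "cinner psi w = 0"
    using H(1,2) d by (simp add: psi_def w_def cinner_axis_left gauss_vec_nth complex_of_gauss_of_int)
  have psi_phi: "cinner psi phi = 1 / of_real s" and psi_phi': "cinner psi phi' = 1 / of_real s"
    using G G' unfolding psi_def phi_def phi'_def by (simp_all only: cinner_axis_scaled_gauss_vec)
  then show "cinner psi phi \<noteq> 0" "cinner psi phi' \<noteq> 0"
    using s by simp_all
  have "cinner phi psi = cnj (cinner psi phi)"
    by (rule cinner_commute)
  then have "cinner phi psi = 1 / of_real s"
    using psi_phi by simp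
  moreover have "cinner phi w = complex_of_gauss (gauss_inner G H) / of_real s"
    "cinner w phi' = complex_of_gauss (gauss_inner H G') / of_real s"
    "cinner w w = complex_of_gauss (gauss_inner H H)"
    using G G' H(1) by (simp_all add: phi_def phi'_def w_def cinner_scale_left cinner_scale_right cinner_gauss_vec)
  ultimately have "cinner phi psi * cinner psi phi' * cinner w w + cinner phi w * cinner w phi'
      = (complex_of_gauss (gauss_inner H H)
          + complex_of_gauss (gauss_inner G H) * complex_of_gauss (gauss_inner H G')) / of_real (s * s)"
    using s psi_phi' by simp (simp add: field_simps)
  also have "\<dots> = complex_of_gauss (gauss_witness_defect G G' H) / of_real (s * s)"
    using G G' by (simp add: gauss_witness_defect_def complex_of_gauss_add complex_of_gauss_mult
        complex_of_gauss_cnj complex_of_gauss_of_int)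
  finally show "cinner phi psi * cinner psi phi' * cinner w w + cinner phi w * cinner w phi' = 0"
    using defect by (simp add: complex_of_gauss_of_int)
qed

lemma gauss_family_k_bound:
  fixes M :: "'l measure" and mu :: "'d::finite cvec \<Rightarrow> 'l \<Rightarrow> real" and k :: real
  assumes m: "onto_model_reproducing M mu xi" and d: "CARD('d) \<ge> 3"
    and bound: "\<And>psi phi. pure_state psi \<Longrightarrow> pure_state phi \<Longrightarrow>
                  omega_C M (mu psi) (mu phi) \<ge> k * omega_Q psi phi"
    and D: "D > 0" and cert: "gauss_family_certificate CARD('d) D L W"
  shows "k * (real (length L) * (1 - sqrt (1 - 1 / real_of_int D))) \<le> 1"
proof -
  define s where "s = sqrt (real_of_int D)"
  have s: "s > 0" "s * s = real_of_int D"
    using D by (simp_all add: s_def)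
  define psi :: "'d cvec" where "psi = axis (list_coord 0) 1"
  define phi :: "nat \<Rightarrow> 'd cvec" where "phi i = (1 / of_real s) *s gauss_vec (L ! i)" for i
  note row = gauss_family_certificateD(1)[OF cert]
  have psi_phi: "cinner psi (phi i) = 1 / of_real s" if "i < length L" for i
    using row[OF that] unfolding psi_def phi_def by (simp only: cinner_axis_scaled_gauss_vec)
  have "k * (\<Sum>i<length L. omega_Q psi (phi i)) \<le> 1"
  proof (rule k_omega_Q_sum_le_1[OF m finite_lessThan _ _ _ bound])
    show "pure_state psi"
      by (simp add: psi_def pure_state_axis)
    show "pure_state (phi i)" if "i \<in> {..<length L}" for i
      using row[of i] that s D
      by (simp add: pure_state_def phi_def cinner_scale_left cinner_scale_right cinner_gauss_vec
          complex_of_gauss_of_int field_simps flip: of_real_mult)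
    show "antidistinguishable psi (phi i) (phi j)"
      if "i \<in> {..<length L}" "j \<in> {..<length L}" "i \<noteq> j" for i j
      using that row[of i] row[of j] gauss_family_certificateD(2)[OF cert, of i j] s
      unfolding psi_def phi_def by (intro gauss_vecs_antidistinguishable[OF d, where H = "W ! i ! j"]) auto
  qed
  moreover have "omega_Q psi (phi i) = 1 - sqrt (1 - 1 / real_of_int D)" if "i < length L" for i
    using psi_phi[OF that] s by (simp add: omega_Q_def norm_divide power_divide power2_eq_square flip: s(2))
  ultimately show ?thesis
    by simp
qed

lemma mult_pred_less_power_two: "4 \<le> n \<Longrightarrow> n * (n - 1) < (2::nat) ^ n"
proof (induction n rule: nat_induct_at_least)
  case base
  then show ?case by simp
next
  case (Suc n)
  have "4 * n \<le> n * n"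
    using Suc.hyps mult_le_mono1[of 4 n n] by simp
  moreover have "n * (n - 1) = n * n - n" "Suc n * (Suc n - 1) = n * n + n"
    by (simp_all add: diff_mult_distrib2)
  ultimately have "Suc n * (Suc n - 1) \<le> 2 * (n * (n - 1))"
    by linarith
  also have "\<dots> < 2 * 2 ^ n"
    using Suc.IH by simp
  finally show ?case by simp
qed

lemma double_square_less_power_two: "7 \<le> n \<Longrightarrow> 2 * n\<^sup>2 < (2::nat) ^ n"
proof (induction n rule: nat_induct_at_least)
  case base
  then show ?case by simp
next
  case (Suc n)
  have "7 * n \<le> n * n"
    using Suc.hyps mult_le_mono1[of 7 n n] by simp
  moreover have "(Suc n)\<^sup>2 = n * n + 2 * n + 1" "n\<^sup>2 = n * n"
    by (simp_all add: power2_eq_square)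
  ultimately have "2 * (Suc n)\<^sup>2 \<le> 2 * (2 * n\<^sup>2)"
    using Suc.hyps by linarith
  also have "\<dots> < 2 * 2 ^ n"
    using Suc.IH by simp
  finally show ?case by simp
qed

lemma not_primepow_6: "\<not> primepow (6::nat)"
proof
  assume "primepow (6::nat)"
  then obtain p k where p: "prime p" and pk: "(6::nat) = p ^ k"
    unfolding primepow_def by auto
  have "2 dvd p" "3 dvd p"
    using prime_dvd_power[of "2::nat" p k] prime_dvd_power[of "3::nat" p k] by (simp_all flip: pk)
  moreover have "p = 2"
    using p \<open>2 dvd p\<close> unfolding prime_nat_iff by auto
  ultimately show False
    by simp
qed

text \<open>Families of \<open>d\<^sup>2\<close> unnormalised vectors with entries in \<open>{\<plusminus>1, \<plusminus>i}\<close> and first entry \<open>1\<close>,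
  for \<open>d = 4, 5\<close>, together with a witness vector for every ordered pair of distinct members.\<close>
definition family_4 :: "(int \<times> int) list list" where
  "family_4 = [[(1, 0), (1, 0), (1, 0), (1, 0)],
    [(1, 0), (1, 0), (0, 1), (0, -1)],
    [(1, 0), (1, 0), (-1, 0), (-1, 0)],
    [(1, 0), (1, 0), (0, -1), (0, 1)],
    [(1, 0), (0, 1), (1, 0), (0, -1)],
    [(1, 0), (0, 1), (0, 1), (-1, 0)],
    [(1, 0), (0, 1), (-1, 0), (0, 1)],
    [(1, 0), (0, 1), (0, -1), (1, 0)],
    [(1, 0), (-1, 0), (1, 0), (-1, 0)],
    [(1, 0), (-1, 0), (0, 1), (0, 1)],
    [(1, 0), (-1, 0), (-1, 0), (1, 0)],
    [(1, 0), (-1, 0), (0, -1), (0, -1)],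
    [(1, 0), (0, -1), (1, 0), (0, 1)],
    [(1, 0), (0, -1), (0, 1), (1, 0)],
    [(1, 0), (0, -1), (-1, 0), (0, -1)],
    [(1, 0), (0, -1), (0, -1), (-1, 0)]]"

definition witnesses_4 :: "(int \<times> int) list list list" where
  "witnesses_4 = [[[(0, 0), (0, 0), (0, 0), (0, 0)], [(0, 0), (0, 0), (1, 0), (0, 1)], [(0, 0), (0, 0), (0, 0), (1, 0)], [(0, 0), (0, 0), (1, 0), (0, -1)], [(0, 0), (1, 0), (0, 0), (0, 1)], [(0, 0), (0, 0), (0, 0), (1, 0)], [(0, 0), (0, 0), (1, 0), (0, 0)], [(0, 0), (1, 0), (0, 1), (0, 0)], [(0, 0), (0, 0), (0, 0), (1, 0)], [(0, 0), (1, 0), (0, 0), (0, 0)], [(0, 0), (0, 0), (1, 0), (0, 0)], [(0, 0), (1, 0), (0, 0), (0, 0)], [(0, 0), (1, 0), (0, 0), (0, -1)], [(0, 0), (1, 0), (0, -1), (0, 0)], [(0, 0), (0, 0), (1, 0), (0, 0)], [(0, 0), (0, 0), (0, 0), (1, 0)]],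
    [[(0, 0), (0, 0), (1, 0), (0, 1)], [(0, 0), (0, 0), (0, 0), (0, 0)], [(0, 0), (0, 0), (1, 0), (0, -1)], [(0, 0), (0, 0), (0, 0), (1, 0)], [(0, 0), (1, 0), (-1, 0), (0, 0)], [(0, 0), (1, 0), (0, 0), (1, 0)], [(0, 0), (0, 0), (0, 0), (1, 0)], [(0, 0), (0, 0), (1, 0), (0, 0)], [(0, 0), (1, 0), (0, 0), (0, 0)], [(0, 0), (0, 0), (0, 0), (1, 0)], [(0, 0), (1, 0), (0, 0), (0, 0)], [(0, 0), (0, 0), (1, 0), (0, 0)], [(0, 0), (0, 0), (0, 0), (1, 0)], [(0, 0), (1, 0), (0, 0), (-1, 0)], [(0, 0), (1, 0), (1, 0), (0, 0)], [(0, 0), (0, 0), (1, 0), (0, 0)]],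
    [[(0, 0), (0, 0), (0, 0), (1, 0)], [(0, 0), (0, 0), (1, 0), (0, -1)], [(0, 0), (0, 0), (0, 0), (0, 0)], [(0, 0), (0, 0), (1, 0), (0, 1)], [(0, 0), (0, 0), (1, 0), (0, 0)], [(0, 0), (1, 0), (0, -1), (0, 0)], [(0, 0), (1, 0), (0, 0), (0, -1)], [(0, 0), (0, 0), (0, 0), (1, 0)], [(0, 0), (0, 0), (1, 0), (0, 0)], [(0, 0), (1, 0), (0, 0), (0, 0)], [(0, 0), (0, 0), (0, 0), (1, 0)], [(0, 0), (1, 0), (0, 0), (0, 0)], [(0, 0), (0, 0), (1, 0), (0, 0)], [(0, 0), (0, 0), (0, 0), (1, 0)], [(0, 0), (1, 0), (0, 0), (0, 1)], [(0, 0), (1, 0), (0, 1), (0, 0)]],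
    [[(0, 0), (0, 0), (1, 0), (0, -1)], [(0, 0), (0, 0), (0, 0), (1, 0)], [(0, 0), (0, 0), (1, 0), (0, 1)], [(0, 0), (0, 0), (0, 0), (0, 0)], [(0, 0), (0, 0), (0, 0), (1, 0)], [(0, 0), (0, 0), (1, 0), (0, 0)], [(0, 0), (1, 0), (1, 0), (0, 0)], [(0, 0), (1, 0), (0, 0), (-1, 0)], [(0, 0), (1, 0), (0, 0), (0, 0)], [(0, 0), (0, 0), (1, 0), (0, 0)], [(0, 0), (1, 0), (0, 0), (0, 0)], [(0, 0), (0, 0), (0, 0), (1, 0)], [(0, 0), (1, 0), (-1, 0), (0, 0)], [(0, 0), (0, 0), (1, 0), (0, 0)], [(0, 0), (0, 0), (0, 0), (1, 0)], [(0, 0), (1, 0), (0, 0), (1, 0)]],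
    [[(0, 0), (1, 0), (0, 0), (0, 1)], [(0, 0), (1, 0), (-1, 0), (0, 0)], [(0, 0), (0, 0), (1, 0), (0, 0)], [(0, 0), (0, 0), (0, 0), (1, 0)], [(0, 0), (0, 0), (0, 0), (0, 0)], [(0, 0), (0, 0), (1, 0), (1, 0)], [(0, 0), (0, 0), (0, 0), (1, 0)], [(0, 0), (0, 0), (1, 0), (-1, 0)], [(0, 0), (1, 0), (0, 0), (0, -1)], [(0, 0), (0, 0), (0, 0), (1, 0)], [(0, 0), (0, 0), (1, 0), (0, 0)], [(0, 0), (1, 0), (1, 0), (0, 0)], [(0, 0), (0, 0), (0, 0), (1, 0)], [(0, 0), (1, 0), (0, 0), (0, 0)], [(0, 0), (0, 0), (1, 0), (0, 0)], [(0, 0), (1, 0), (0, 0), (0, 0)]],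
    [[(0, 0), (0, 0), (0, 0), (1, 0)], [(0, 0), (1, 0), (0, 0), (1, 0)], [(0, 0), (1, 0), (0, -1), (0, 0)], [(0, 0), (0, 0), (1, 0), (0, 0)], [(0, 0), (0, 0), (1, 0), (1, 0)], [(0, 0), (0, 0), (0, 0), (0, 0)], [(0, 0), (0, 0), (1, 0), (-1, 0)], [(0, 0), (0, 0), (0, 0), (1, 0)], [(0, 0), (1, 0), (0, 1), (0, 0)], [(0, 0), (1, 0), (0, 0), (-1, 0)], [(0, 0), (0, 0), (0, 0), (1, 0)], [(0, 0), (0, 0), (1, 0), (0, 0)], [(0, 0), (1, 0), (0, 0), (0, 0)], [(0, 0), (0, 0), (0, 0), (1, 0)], [(0, 0), (1, 0), (0, 0), (0, 0)], [(0, 0), (0, 0), (1, 0), (0, 0)]],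
    [[(0, 0), (0, 0), (1, 0), (0, 0)], [(0, 0), (0, 0), (0, 0), (1, 0)], [(0, 0), (1, 0), (0, 0), (0, -1)], [(0, 0), (1, 0), (1, 0), (0, 0)], [(0, 0), (0, 0), (0, 0), (1, 0)], [(0, 0), (0, 0), (1, 0), (-1, 0)], [(0, 0), (0, 0), (0, 0), (0, 0)], [(0, 0), (0, 0), (1, 0), (1, 0)], [(0, 0), (0, 0), (1, 0), (0, 0)], [(0, 0), (1, 0), (-1, 0), (0, 0)], [(0, 0), (1, 0), (0, 0), (0, 1)], [(0, 0), (0, 0), (0, 0), (1, 0)], [(0, 0), (0, 0), (1, 0), (0, 0)], [(0, 0), (1, 0), (0, 0), (0, 0)], [(0, 0), (0, 0), (0, 0), (1, 0)], [(0, 0), (1, 0), (0, 0), (0, 0)]],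
    [[(0, 0), (1, 0), (0, 1), (0, 0)], [(0, 0), (0, 0), (1, 0), (0, 0)], [(0, 0), (0, 0), (0, 0), (1, 0)], [(0, 0), (1, 0), (0, 0), (-1, 0)], [(0, 0), (0, 0), (1, 0), (-1, 0)], [(0, 0), (0, 0), (0, 0), (1, 0)], [(0, 0), (0, 0), (1, 0), (1, 0)], [(0, 0), (0, 0), (0, 0), (0, 0)], [(0, 0), (0, 0), (0, 0), (1, 0)], [(0, 0), (0, 0), (1, 0), (0, 0)], [(0, 0), (1, 0), (0, -1), (0, 0)], [(0, 0), (1, 0), (0, 0), (1, 0)], [(0, 0), (1, 0), (0, 0), (0, 0)], [(0, 0), (0, 0), (1, 0), (0, 0)], [(0, 0), (1, 0), (0, 0), (0, 0)], [(0, 0), (0, 0), (0, 0), (1, 0)]],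
    [[(0, 0), (0, 0), (0, 0), (1, 0)], [(0, 0), (1, 0), (0, 0), (0, 0)], [(0, 0), (0, 0), (1, 0), (0, 0)], [(0, 0), (1, 0), (0, 0), (0, 0)], [(0, 0), (1, 0), (0, 0), (0, -1)], [(0, 0), (1, 0), (0, 1), (0, 0)], [(0, 0), (0, 0), (1, 0), (0, 0)], [(0, 0), (0, 0), (0, 0), (1, 0)], [(0, 0), (0, 0), (0, 0), (0, 0)], [(0, 0), (0, 0), (1, 0), (0, -1)], [(0, 0), (0, 0), (0, 0), (1, 0)], [(0, 0), (0, 0), (1, 0), (0, 1)], [(0, 0), (1, 0), (0, 0), (0, 1)], [(0, 0), (0, 0), (0, 0), (1, 0)], [(0, 0), (0, 0), (1, 0), (0, 0)], [(0, 0), (1, 0), (0, -1), (0, 0)]],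
    [[(0, 0), (1, 0), (0, 0), (0, 0)], [(0, 0), (0, 0), (0, 0), (1, 0)], [(0, 0), (1, 0), (0, 0), (0, 0)], [(0, 0), (0, 0), (1, 0), (0, 0)], [(0, 0), (0, 0), (0, 0), (1, 0)], [(0, 0), (1, 0), (0, 0), (-1, 0)], [(0, 0), (1, 0), (-1, 0), (0, 0)], [(0, 0), (0, 0), (1, 0), (0, 0)], [(0, 0), (0, 0), (1, 0), (0, -1)], [(0, 0), (0, 0), (0, 0), (0, 0)], [(0, 0), (0, 0), (1, 0), (0, 1)], [(0, 0), (0, 0), (0, 0), (1, 0)], [(0, 0), (1, 0), (1, 0), (0, 0)], [(0, 0), (1, 0), (0, 0), (1, 0)], [(0, 0), (0, 0), (0, 0), (1, 0)], [(0, 0), (0, 0), (1, 0), (0, 0)]],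
    [[(0, 0), (0, 0), (1, 0), (0, 0)], [(0, 0), (1, 0), (0, 0), (0, 0)], [(0, 0), (0, 0), (0, 0), (1, 0)], [(0, 0), (1, 0), (0, 0), (0, 0)], [(0, 0), (0, 0), (1, 0), (0, 0)], [(0, 0), (0, 0), (0, 0), (1, 0)], [(0, 0), (1, 0), (0, 0), (0, 1)], [(0, 0), (1, 0), (0, -1), (0, 0)], [(0, 0), (0, 0), (0, 0), (1, 0)], [(0, 0), (0, 0), (1, 0), (0, 1)], [(0, 0), (0, 0), (0, 0), (0, 0)], [(0, 0), (0, 0), (1, 0), (0, -1)], [(0, 0), (0, 0), (1, 0), (0, 0)], [(0, 0), (1, 0), (0, 1), (0, 0)], [(0, 0), (1, 0), (0, 0), (0, -1)], [(0, 0), (0, 0), (0, 0), (1, 0)]],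
    [[(0, 0), (1, 0), (0, 0), (0, 0)], [(0, 0), (0, 0), (1, 0), (0, 0)], [(0, 0), (1, 0), (0, 0), (0, 0)], [(0, 0), (0, 0), (0, 0), (1, 0)], [(0, 0), (1, 0), (1, 0), (0, 0)], [(0, 0), (0, 0), (1, 0), (0, 0)], [(0, 0), (0, 0), (0, 0), (1, 0)], [(0, 0), (1, 0), (0, 0), (1, 0)], [(0, 0), (0, 0), (1, 0), (0, 1)], [(0, 0), (0, 0), (0, 0), (1, 0)], [(0, 0), (0, 0), (1, 0), (0, -1)], [(0, 0), (0, 0), (0, 0), (0, 0)], [(0, 0), (0, 0), (0, 0), (1, 0)], [(0, 0), (0, 0), (1, 0), (0, 0)], [(0, 0), (1, 0), (-1, 0), (0, 0)], [(0, 0), (1, 0), (0, 0), (-1, 0)]],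
    [[(0, 0), (1, 0), (0, 0), (0, -1)], [(0, 0), (0, 0), (0, 0), (1, 0)], [(0, 0), (0, 0), (1, 0), (0, 0)], [(0, 0), (1, 0), (-1, 0), (0, 0)], [(0, 0), (0, 0), (0, 0), (1, 0)], [(0, 0), (1, 0), (0, 0), (0, 0)], [(0, 0), (0, 0), (1, 0), (0, 0)], [(0, 0), (1, 0), (0, 0), (0, 0)], [(0, 0), (1, 0), (0, 0), (0, 1)], [(0, 0), (1, 0), (1, 0), (0, 0)], [(0, 0), (0, 0), (1, 0), (0, 0)], [(0, 0), (0, 0), (0, 0), (1, 0)], [(0, 0), (0, 0), (0, 0), (0, 0)], [(0, 0), (0, 0), (1, 0), (-1, 0)], [(0, 0), (0, 0), (0, 0), (1, 0)], [(0, 0), (0, 0), (1, 0), (1, 0)]],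
    [[(0, 0), (1, 0), (0, -1), (0, 0)], [(0, 0), (1, 0), (0, 0), (-1, 0)], [(0, 0), (0, 0), (0, 0), (1, 0)], [(0, 0), (0, 0), (1, 0), (0, 0)], [(0, 0), (1, 0), (0, 0), (0, 0)], [(0, 0), (0, 0), (0, 0), (1, 0)], [(0, 0), (1, 0), (0, 0), (0, 0)], [(0, 0), (0, 0), (1, 0), (0, 0)], [(0, 0), (0, 0), (0, 0), (1, 0)], [(0, 0), (1, 0), (0, 0), (1, 0)], [(0, 0), (1, 0), (0, 1), (0, 0)], [(0, 0), (0, 0), (1, 0), (0, 0)], [(0, 0), (0, 0), (1, 0), (-1, 0)], [(0, 0), (0, 0), (0, 0), (0, 0)], [(0, 0), (0, 0), (1, 0), (1, 0)], [(0, 0), (0, 0), (0, 0), (1, 0)]],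
    [[(0, 0), (0, 0), (1, 0), (0, 0)], [(0, 0), (1, 0), (1, 0), (0, 0)], [(0, 0), (1, 0), (0, 0), (0, 1)], [(0, 0), (0, 0), (0, 0), (1, 0)], [(0, 0), (0, 0), (1, 0), (0, 0)], [(0, 0), (1, 0), (0, 0), (0, 0)], [(0, 0), (0, 0), (0, 0), (1, 0)], [(0, 0), (1, 0), (0, 0), (0, 0)], [(0, 0), (0, 0), (1, 0), (0, 0)], [(0, 0), (0, 0), (0, 0), (1, 0)], [(0, 0), (1, 0), (0, 0), (0, -1)], [(0, 0), (1, 0), (-1, 0), (0, 0)], [(0, 0), (0, 0), (0, 0), (1, 0)], [(0, 0), (0, 0), (1, 0), (1, 0)], [(0, 0), (0, 0), (0, 0), (0, 0)], [(0, 0), (0, 0), (1, 0), (-1, 0)]],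
    [[(0, 0), (0, 0), (0, 0), (1, 0)], [(0, 0), (0, 0), (1, 0), (0, 0)], [(0, 0), (1, 0), (0, 1), (0, 0)], [(0, 0), (1, 0), (0, 0), (1, 0)], [(0, 0), (1, 0), (0, 0), (0, 0)], [(0, 0), (0, 0), (1, 0), (0, 0)], [(0, 0), (1, 0), (0, 0), (0, 0)], [(0, 0), (0, 0), (0, 0), (1, 0)], [(0, 0), (1, 0), (0, -1), (0, 0)], [(0, 0), (0, 0), (1, 0), (0, 0)], [(0, 0), (0, 0), (0, 0), (1, 0)], [(0, 0), (1, 0), (0, 0), (-1, 0)], [(0, 0), (0, 0), (1, 0), (1, 0)], [(0, 0), (0, 0), (0, 0), (1, 0)], [(0, 0), (0, 0), (1, 0), (-1, 0)], [(0, 0), (0, 0), (0, 0), (0, 0)]]]"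

definition family_5 :: "(int \<times> int) list list" where
  "family_5 = [[(1, 0), (1, 0), (1, 0), (1, 0), (1, 0)],
    [(1, 0), (1, 0), (1, 0), (1, 0), (-1, 0)],
    [(1, 0), (1, 0), (1, 0), (-1, 0), (1, 0)],
    [(1, 0), (1, 0), (1, 0), (-1, 0), (-1, 0)],
    [(1, 0), (1, 0), (-1, 0), (1, 0), (1, 0)],
    [(1, 0), (1, 0), (-1, 0), (0, 1), (-1, 0)],
    [(1, 0), (1, 0), (-1, 0), (-1, 0), (0, 1)],
    [(1, 0), (0, 1), (-1, 0), (1, 0), (0, -1)],
    [(1, 0), (0, 1), (-1, 0), (0, -1), (1, 0)],
    [(1, 0), (0, 1), (0, -1), (1, 0), (-1, 0)],
    [(1, 0), (0, 1), (0, -1), (-1, 0), (1, 0)],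
    [(1, 0), (0, 1), (0, -1), (0, -1), (0, -1)],
    [(1, 0), (-1, 0), (1, 0), (1, 0), (0, 1)],
    [(1, 0), (-1, 0), (1, 0), (0, 1), (1, 0)],
    [(1, 0), (-1, 0), (1, 0), (-1, 0), (-1, 0)],
    [(1, 0), (-1, 0), (0, 1), (1, 0), (0, -1)],
    [(1, 0), (-1, 0), (0, 1), (0, -1), (1, 0)],
    [(1, 0), (-1, 0), (-1, 0), (1, 0), (-1, 0)],
    [(1, 0), (-1, 0), (-1, 0), (0, 1), (0, 1)],
    [(1, 0), (-1, 0), (-1, 0), (-1, 0), (1, 0)],
    [(1, 0), (-1, 0), (-1, 0), (0, -1), (0, -1)],
    [(1, 0), (-1, 0), (0, -1), (-1, 0), (0, -1)],
    [(1, 0), (-1, 0), (0, -1), (0, -1), (-1, 0)],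
    [(1, 0), (0, -1), (-1, 0), (-1, 0), (0, -1)],
    [(1, 0), (0, -1), (-1, 0), (0, -1), (-1, 0)]]"

definition witnesses_5 :: "(int \<times> int) list list list" where
  "witnesses_5 = [[[(0, 0), (0, 0), (0, 0), (0, 0), (0, 0)], [(0, 0), (0, 0), (0, 0), (0, 0), (1, 0)], [(0, 0), (0, 0), (0, 0), (1, 0), (0, 0)], [(0, 0), (0, 0), (0, 0), (0, 0), (1, 0)], [(0, 0), (0, 0), (1, 0), (0, 0), (0, 0)], [(0, 0), (0, 0), (0, 0), (0, 0), (1, 0)], [(0, 0), (0, 0), (0, 0), (1, 0), (0, 0)], [(0, 0), (0, 0), (1, 0), (0, 0), (0, 0)], [(0, 0), (0, 0), (1, 0), (0, 0), (0, 0)], [(0, 0), (0, 0), (0, 0), (0, 0), (1, 0)], [(0, 0), (0, 0), (0, 0), (1, 0), (0, 0)], [(0, 0), (1, 0), (0, 0), (0, 0), (0, 1)], [(0, 0), (1, 0), (0, 0), (0, 0), (0, 0)], [(0, 0), (1, 0), (0, 0), (0, 0), (0, 0)], [(0, 0), (0, 0), (0, 0), (0, 0), (1, 0)], [(0, 0), (1, 0), (0, 0), (0, 0), (0, 0)], [(0, 0), (1, 0), (0, 0), (0, 0), (0, 0)], [(0, 0), (0, 0), (0, 0), (0, 0), (1, 0)], [(0, 0), (0, 0), (1, 0), (0, 0), (0, 0)], [(0, 0), (0, 0), (0, 0), (1, 0), (0, 0)], [(0, 0), (0, 0), (1, 0), (0, 0), (0, 0)], [(0, 0), (0, 0), (0,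 0), (1, 0), (0, 0)], [(0, 0), (0, 0), (0, 0), (0, 0), (1, 0)], [(0, 0), (0, 0), (0, 0), (1, 0), (0, 0)], [(0, 0), (0, 0), (0, 0), (0, 0), (1, 0)]],
    [[(0, 0), (0, 0), (0, 0), (0, 0), (1, 0)], [(0, 0), (0, 0), (0, 0), (0, 0), (0, 0)], [(0, 0), (0, 0), (0, 0), (0, 0), (1, 0)], [(0, 0), (0, 0), (0, 0), (1, 0), (0, 0)], [(0, 0), (0, 0), (0, 0), (0, 0), (1, 0)], [(0, 0), (0, 0), (1, 0), (0, 0), (0, 0)], [(0, 0), (0, 0), (0, 0), (1, 0), (0, 0)], [(0, 0), (0, 0), (1, 0), (0, 0), (0, 0)], [(0, 0), (0, 0), (0, 0), (0, 0), (1, 0)], [(0, 0), (1, 0), (0, 1), (0, 0), (0, 0)], [(0, 0), (0, 0), (0, 0), (0, 0), (1, 0)], [(0, 0), (0, 0), (0, 0), (1, 0), (0, 1)], [(0, 0), (1, 0), (0, 0), (0, 0), (0, 0)], [(0, 0), (0, 0), (0, 0), (0, 0), (1, 0)], [(0, 0), (0, 0), (0, 0), (1, 0), (0, 0)], [(0, 0), (1, 0), (0, 0), (0, 0), (0, 0)], [(0, 0), (0, 0), (0, 0), (0, 0), (1, 0)], [(0, 0), (0, 0), (1, 0), (0, 0), (0, 0)], [(0, 0), (0, 0), (1, 0), (0, 0), (0, 0)], [(0, 0), (0, 0), (0, 0), (0, 0), (1, 0)], [(0, 0), (0, 0), (1, 0), (0, 0), (0, 0)], [(0, 0), (0, 0),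 (0, 0), (1, 0), (0, 0)], [(0, 0), (1, 0), (0, 0), (0, 0), (0, 0)], [(0, 0), (0, 0), (0, 0), (1, 0), (0, 0)], [(0, 0), (0, 0), (1, 0), (0, 0), (0, 0)]],
    [[(0, 0), (0, 0), (0, 0), (1, 0), (0, 0)], [(0, 0), (0, 0), (0, 0), (0, 0), (1, 0)], [(0, 0), (0, 0), (0, 0), (0, 0), (0, 0)], [(0, 0), (0, 0), (0, 0), (0, 0), (1, 0)], [(0, 0), (0, 0), (0, 0), (1, 0), (0, 0)], [(0, 0), (0, 0), (0, 0), (0, 0), (1, 0)], [(0, 0), (0, 0), (1, 0), (0, 0), (0, 0)], [(0, 0), (0, 0), (0, 0), (1, 0), (0, 0)], [(0, 0), (0, 0), (1, 0), (0, 0), (0, 0)], [(0, 0), (0, 0), (0, 0), (0, 0), (1, 0)], [(0, 0), (1, 0), (0, 1), (0, 0), (0, 0)], [(0, 0), (0, 0), (0, 0), (1, 0), (0, -1)], [(0, 0), (0, 0), (0, 0), (1, 0), (0, 0)], [(0, 0), (1, 0), (0, 0), (0, 0), (0, 0)], [(0, 0), (0, 0), (0, 0), (0, 0), (1, 0)], [(0, 0), (0, 0), (0, 0), (1, 0), (0, 0)], [(0, 0), (1, 0), (0, 0), (0, 0), (0, 0)], [(0, 0), (0, 0), (0, 0), (0, 0), (1, 0)], [(0, 0), (0, 0), (1, 0), (0, 0), (0, 0)], [(0, 0), (0, 0), (1, 0), (0, 0), (0, 0)], [(0, 0), (0, 0), (1, 0), (0, 0), (0, 0)], [(0, 0), (1,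 0), (0, 0), (0, 0), (0, 0)], [(0, 0), (0, 0), (0, 0), (0, 0), (1, 0)], [(0, 0), (0, 0), (1, 0), (0, 0), (0, 0)], [(0, 0), (0, 0), (0, 0), (0, 0), (1, 0)]],
    [[(0, 0), (0, 0), (0, 0), (0, 0), (1, 0)], [(0, 0), (0, 0), (0, 0), (1, 0), (0, 0)], [(0, 0), (0, 0), (0, 0), (0, 0), (1, 0)], [(0, 0), (0, 0), (0, 0), (0, 0), (0, 0)], [(0, 0), (0, 0), (0, 0), (0, 0), (1, 0)], [(0, 0), (0, 0), (1, 0), (0, 0), (0, 0)], [(0, 0), (0, 0), (1, 0), (0, 0), (0, 0)], [(0, 0), (0, 0), (0, 0), (1, 0), (0, 0)], [(0, 0), (0, 0), (0, 0), (0, 0), (1, 0)], [(0, 0), (0, 0), (0, 0), (1, 0), (0, 0)], [(0, 0), (0, 0), (0, 0), (0, 0), (1, 0)], [(0, 0), (0, 0), (1, 0), (0, 0), (0, 1)], [(0, 0), (0, 0), (0, 0), (1, 0), (0, 0)], [(0, 0), (0, 0), (0, 0), (0, 0), (1, 0)], [(0, 0), (1, 0), (0, 0), (0, 0), (0, 0)], [(0, 0), (0, 0), (0, 0), (1, 0), (0, 0)], [(0, 0), (0, 0), (0, 0), (0, 0), (1, 0)], [(0, 0), (0, 0), (0, 0), (1, 0), (0, 0)], [(0, 0), (0, 0), (1, 0), (0, 0), (0, 0)], [(0, 0), (0, 0), (0, 0), (0, 0), (1, 0)], [(0, 0), (0, 0), (1, 0), (0, 0), (0, 0)], [(0, 0),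 (1, 0), (0, 0), (0, 0), (0, 0)], [(0, 0), (1, 0), (0, 0), (0, 0), (0, 0)], [(0, 0), (0, 0), (1, 0), (0, 0), (0, 0)], [(0, 0), (0, 0), (1, 0), (0, 0), (0, 0)]],
    [[(0, 0), (0, 0), (1, 0), (0, 0), (0, 0)], [(0, 0), (0, 0), (0, 0), (0, 0), (1, 0)], [(0, 0), (0, 0), (0, 0), (1, 0), (0, 0)], [(0, 0), (0, 0), (0, 0), (0, 0), (1, 0)], [(0, 0), (0, 0), (0, 0), (0, 0), (0, 0)], [(0, 0), (0, 0), (0, 0), (0, 0), (1, 0)], [(0, 0), (0, 0), (0, 0), (1, 0), (0, 0)], [(0, 0), (1, 0), (0, 0), (0, 0), (0, 1)], [(0, 0), (1, 0), (0, 0), (0, 1), (0, 0)], [(0, 0), (0, 0), (0, 0), (0, 0), (1, 0)], [(0, 0), (0, 0), (0, 0), (1, 0), (0, 0)], [(0, 0), (0, 0), (1, 0), (0, 0), (0, -1)], [(0, 0), (0, 0), (1, 0), (0, 0), (0, 0)], [(0, 0), (0, 0), (1, 0), (0, 0), (0, 0)], [(0, 0), (0, 0), (0, 0), (0, 0), (1, 0)], [(0, 0), (1, 0), (0, 0), (0, 0), (0, 0)], [(0, 0), (1, 0), (0, 0), (0, 0), (0, 0)], [(0, 0), (0, 0), (0, 0), (0, 0), (1, 0)], [(0, 0), (1, 0), (0, 0), (0, 0), (0, 0)], [(0, 0), (0, 0), (0, 0), (1, 0), (0, 0)], [(0, 0), (1, 0), (0, 0), (0, 0), (0, 0)], [(0,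 0), (0, 0), (0, 0), (1, 0), (0, 0)], [(0, 0), (0, 0), (0, 0), (0, 0), (1, 0)], [(0, 0), (0, 0), (0, 0), (1, 0), (0, 0)], [(0, 0), (0, 0), (0, 0), (0, 0), (1, 0)]],
    [[(0, 0), (0, 0), (0, 0), (0, 0), (1, 0)], [(0, 0), (0, 0), (1, 0), (0, 0), (0, 0)], [(0, 0), (0, 0), (0, 0), (0, 0), (1, 0)], [(0, 0), (0, 0), (1, 0), (0, 0), (0, 0)], [(0, 0), (0, 0), (0, 0), (0, 0), (1, 0)], [(0, 0), (0, 0), (0, 0), (0, 0), (0, 0)], [(0, 0), (0, 0), (0, 0), (1, 0), (-1, 0)], [(0, 0), (0, 0), (0, 0), (1, 0), (1, 0)], [(0, 0), (0, 0), (0, 0), (0, 0), (1, 0)], [(0, 0), (0, 0), (1, 0), (1, 0), (0, 0)], [(0, 0), (0, 0), (0, 0), (0, 0), (1, 0)], [(0, 0), (0, 0), (0, 0), (1, 0), (0, 0)], [(0, 0), (0, 0), (1, 0), (0, 0), (0, 0)], [(0, 0), (0, 0), (0, 0), (0, 0), (1, 0)], [(0, 0), (0, 0), (1, 0), (0, 0), (0, 0)], [(0, 0), (1, 0), (0, 0), (0, 0), (0, 0)], [(0, 0), (0, 0), (0, 0), (0, 0), (1, 0)], [(0, 0), (1, 0), (0, 0), (0, 0), (0, 0)], [(0, 0), (1, 0), (0, 0), (0, 0), (0, 0)], [(0, 0), (0, 0), (0, 0), (0, 0), (1, 0)], [(0, 0), (0, 0), (0, 0), (1, 0), (0, 0)],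 [(0, 0), (1, 0), (0, 0), (0, 0), (0, 0)], [(0, 0), (0, 0), (0, 0), (1, 0), (0, 0)], [(0, 0), (1, 0), (0, 0), (0, 0), (0, 1)], [(0, 0), (0, 0), (0, 0), (1, 0), (0, 0)]],
    [[(0, 0), (0, 0), (0, 0), (1, 0), (0, 0)], [(0, 0), (0, 0), (0, 0), (1, 0), (0, 0)], [(0, 0), (0, 0), (1, 0), (0, 0), (0, 0)], [(0, 0), (0, 0), (1, 0), (0, 0), (0, 0)], [(0, 0), (0, 0), (0, 0), (1, 0), (0, 0)], [(0, 0), (0, 0), (0, 0), (1, 0), (-1, 0)], [(0, 0), (0, 0), (0, 0), (0, 0), (0, 0)], [(0, 0), (0, 0), (0, 0), (0, 0), (1, 0)], [(0, 0), (0, 0), (0, 0), (1, 0), (1, 0)], [(0, 0), (0, 0), (0, 0), (1, 0), (0, 0)], [(0, 0), (0, 0), (1, 0), (0, 0), (1, 0)], [(0, 0), (0, 0), (0, 0), (0, 0), (1, 0)], [(0, 0), (0, 0), (0, 0), (1, 0), (0, 0)], [(0, 0), (0, 0), (1, 0), (0, 0), (0, 0)], [(0, 0), (0, 0), (1, 0), (0, 0), (0, 0)], [(0, 0), (0, 0), (0, 0), (0, 0), (1, 0)], [(0, 0), (1, 0), (0, 0), (0, 0), (0, 0)], [(0, 0), (0, 0), (0, 0), (1, 0), (0, 0)], [(0, 0), (1, 0), (0, 0), (0, 0), (0, 0)], [(0, 0), (1, 0), (0, 0), (0, 0), (0, 0)], [(0, 0), (0, 0), (0, 0), (0, 0), (1,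 0)], [(0, 0), (0, 0), (0, 0), (0, 0), (1, 0)], [(0, 0), (1, 0), (0, 0), (0, 0), (0, 0)], [(0, 0), (0, 0), (0, 0), (0, 0), (1, 0)], [(0, 0), (1, 0), (0, 0), (0, 0), (1, 0)]],
    [[(0, 0), (0, 0), (1, 0), (0, 0), (0, 0)], [(0, 0), (0, 0), (1, 0), (0, 0), (0, 0)], [(0, 0), (0, 0), (0, 0), (1, 0), (0, 0)], [(0, 0), (0, 0), (0, 0), (1, 0), (0, 0)], [(0, 0), (1, 0), (0, 0), (0, 0), (0, 1)], [(0, 0), (0, 0), (0, 0), (1, 0), (1, 0)], [(0, 0), (0, 0), (0, 0), (0, 0), (1, 0)], [(0, 0), (0, 0), (0, 0), (0, 0), (0, 0)], [(0, 0), (0, 0), (0, 0), (1, 0), (-1, 0)], [(0, 0), (0, 0), (1, 0), (0, 0), (-1, 0)], [(0, 0), (0, 0), (0, 0), (1, 0), (0, 0)], [(0, 0), (0, 0), (1, 0), (0, -1), (0, 0)], [(0, 0), (0, 0), (0, 0), (0, 0), (1, 0)], [(0, 0), (0, 0), (1, 0), (0, 0), (0, 0)], [(0, 0), (0, 0), (0, 0), (1, 0), (0, 0)], [(0, 0), (1, 0), (-1, 0), (0, 0), (0, 0)], [(0, 0), (0, 0), (0, 0), (1, 0), (-1, 0)], [(0, 0), (1, 0), (0, 0), (0, 0), (0, -1)], [(0, 0), (0, 0), (0, 0), (0, 0), (1, 0)], [(0, 0), (0, 0), (0, 0), (1, 0), (0, 0)], [(0, 0), (1, 0), (0, 0), (1,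 0), (0, 0)], [(0, 0), (0, 0), (0, 0), (1, 0), (0, 0)], [(0, 0), (0, 0), (1, 0), (0, 0), (-1, 0)], [(0, 0), (0, 0), (0, 0), (1, 0), (0, 0)], [(0, 0), (1, 0), (0, 0), (0, 0), (0, 0)]],
    [[(0, 0), (0, 0), (1, 0), (0, 0), (0, 0)], [(0, 0), (0, 0), (0, 0), (0, 0), (1, 0)], [(0, 0), (0, 0), (1, 0), (0, 0), (0, 0)], [(0, 0), (0, 0), (0, 0), (0, 0), (1, 0)], [(0, 0), (1, 0), (0, 0), (0, 1), (0, 0)], [(0, 0), (0, 0), (0, 0), (0, 0), (1, 0)], [(0, 0), (0, 0), (0, 0), (1, 0), (1, 0)], [(0, 0), (0, 0), (0, 0), (1, 0), (-1, 0)], [(0, 0), (0, 0), (0, 0), (0, 0), (0, 0)], [(0, 0), (0, 0), (0, 0), (0, 0), (1, 0)], [(0, 0), (0, 0), (1, 0), (-1, 0), (0, 0)], [(0, 0), (0, 0), (1, 0), (0, 0), (0, -1)], [(0, 0), (0, 0), (1, 0), (0, 0), (0, 0)], [(0, 0), (0, 0), (0, 0), (1, 0), (0, 0)], [(0, 0), (0, 0), (0, 0), (0, 0), (1, 0)], [(0, 0), (0, 0), (0, 0), (1, 0), (-1, 0)], [(0, 0), (1, 0), (-1, 0), (0, 0), (0, 0)], [(0, 0), (0, 0), (0, 0), (0, 0), (1, 0)], [(0, 0), (0, 0), (0, 0), (1, 0), (0, 0)], [(0, 0), (1, 0), (0, 0), (0, -1), (0, 0)], [(0, 0), (1, 0),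 (0, 0), (0, 0), (1, 0)], [(0, 0), (0, 0), (1, 0), (0, 0), (0, -1)], [(0, 0), (0, 0), (0, 0), (0, 0), (1, 0)], [(0, 0), (1, 0), (0, 0), (0, 0), (0, 0)], [(0, 0), (0, 0), (0, 0), (0, 0), (1, 0)]],
    [[(0, 0), (0, 0), (0, 0), (0, 0), (1, 0)], [(0, 0), (1, 0), (0, 1), (0, 0), (0, 0)], [(0, 0), (0, 0), (0, 0), (0, 0), (1, 0)], [(0, 0), (0, 0), (0, 0), (1, 0), (0, 0)], [(0, 0), (0, 0), (0, 0), (0, 0), (1, 0)], [(0, 0), (0, 0), (1, 0), (1, 0), (0, 0)], [(0, 0), (0, 0), (0, 0), (1, 0), (0, 0)], [(0, 0), (0, 0), (1, 0), (0, 0), (-1, 0)], [(0, 0), (0, 0), (0, 0), (0, 0), (1, 0)], [(0, 0), (0, 0), (0, 0), (0, 0), (0, 0)], [(0, 0), (0, 0), (0, 0), (0, 0), (1, 0)], [(0, 0), (0, 0), (0, 0), (1, 0), (0, 1)], [(0, 0), (0, 0), (1, 0), (0, 0), (1, 0)], [(0, 0), (0, 0), (0, 0), (0, 0), (1, 0)], [(0, 0), (0, 0), (0, 0), (1, 0), (0, 0)], [(0, 0), (0, 0), (1, 0), (0, 0), (0, 0)], [(0, 0), (0, 0), (0, 0), (0, 0), (1, 0)], [(0, 0), (1, 0), (0, -1), (0, 0), (0, 0)], [(0, 0), (0, 0), (0, 0), (1, 0), (0, -1)], [(0, 0), (0, 0), (0, 0), (0, 0), (1, 0)], [(0, 0),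 (0, 0), (0, 0), (1, 0), (0, 1)], [(0, 0), (0, 0), (0, 0), (1, 0), (0, 0)], [(0, 0), (1, 0), (0, 0), (1, 0), (0, 0)], [(0, 0), (0, 0), (0, 0), (1, 0), (0, 0)], [(0, 0), (1, 0), (0, 0), (0, 0), (0, 0)]],
    [[(0, 0), (0, 0), (0, 0), (1, 0), (0, 0)], [(0, 0), (0, 0), (0, 0), (0, 0), (1, 0)], [(0, 0), (1, 0), (0, 1), (0, 0), (0, 0)], [(0, 0), (0, 0), (0, 0), (0, 0), (1, 0)], [(0, 0), (0, 0), (0, 0), (1, 0), (0, 0)], [(0, 0), (0, 0), (0, 0), (0, 0), (1, 0)], [(0, 0), (0, 0), (1, 0), (0, 0), (1, 0)], [(0, 0), (0, 0), (0, 0), (1, 0), (0, 0)], [(0, 0), (0, 0), (1, 0), (-1, 0), (0, 0)], [(0, 0), (0, 0), (0, 0), (0, 0), (1, 0)], [(0, 0), (0, 0), (0, 0), (0, 0), (0, 0)], [(0, 0), (0, 0), (0, 0), (1, 0), (0, -1)], [(0, 0), (0, 0), (0, 0), (1, 0), (0, 0)], [(0, 0), (0, 0), (1, 0), (1, 0), (0, 0)], [(0, 0), (0, 0), (0, 0), (0, 0), (1, 0)], [(0, 0), (0, 0), (0, 0), (1, 0), (0, 0)], [(0, 0), (0, 0), (1, 0), (0, 0), (0, 0)], [(0, 0), (0, 0), (0, 0), (0, 0), (1, 0)], [(0, 0), (0, 0), (0, 0), (1, 0), (0, 1)], [(0, 0), (1, 0), (0, -1), (0, 0), (0, 0)], [(0,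 0), (0, 0), (0, 0), (1, 0), (0, -1)], [(0, 0), (1, 0), (0, 0), (0, 0), (1, 0)], [(0, 0), (0, 0), (0, 0), (0, 0), (1, 0)], [(0, 0), (1, 0), (0, 0), (0, 0), (0, 0)], [(0, 0), (0, 0), (0, 0), (0, 0), (1, 0)]],
    [[(0, 0), (1, 0), (0, 0), (0, 0), (0, 1)], [(0, 0), (0, 0), (0, 0), (1, 0), (0, 1)], [(0, 0), (0, 0), (0, 0), (1, 0), (0, -1)], [(0, 0), (0, 0), (1, 0), (0, 0), (0, 1)], [(0, 0), (0, 0), (1, 0), (0, 0), (0, -1)], [(0, 0), (0, 0), (0, 0), (1, 0), (0, 0)], [(0, 0), (0, 0), (0, 0), (0, 0), (1, 0)], [(0, 0), (0, 0), (1, 0), (0, -1), (0, 0)], [(0, 0), (0, 0), (1, 0), (0, 0), (0, -1)], [(0, 0), (0, 0), (0, 0), (1, 0), (0, 1)], [(0, 0), (0, 0), (0, 0), (1, 0), (0, -1)], [(0, 0), (0, 0), (0, 0), (0, 0), (0, 0)], [(0, 0), (0, 0), (0, 0), (0, 0), (1, 0)], [(0, 0), (0, 0), (0, 0), (1, 0), (0, 0)], [(0, 0), (0, 0), (1, 0), (0, 0), (0, 1)], [(0, 0), (0, 0), (1, 0), (0, 0), (0, 0)], [(0, 0), (0, 0), (1, 0), (0, 0), (0, 0)], [(0, 0), (0, 0), (0, 0), (1, 0), (0, 1)], [(0, 0), (0, 0), (0, 0), (0, 0), (1, 0)], [(0, 0), (0, 0), (0, 0), (1, 0), (0, -1)],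 [(0, 0), (1, 0), (0, -1), (0, 0), (0, 0)], [(0, 0), (1, 0), (0, 0), (0, -1), (0, 0)], [(0, 0), (1, 0), (0, 0), (0, 0), (0, -1)], [(0, 0), (1, 0), (0, 0), (0, 0), (0, 0)], [(0, 0), (1, 0), (0, 0), (0, 0), (0, 0)]],
    [[(0, 0), (1, 0), (0, 0), (0, 0), (0, 0)], [(0, 0), (1, 0), (0, 0), (0, 0), (0, 0)], [(0, 0), (0, 0), (0, 0), (1, 0), (0, 0)], [(0, 0), (0, 0), (0, 0), (1, 0), (0, 0)], [(0, 0), (0, 0), (1, 0), (0, 0), (0, 0)], [(0, 0), (0, 0), (1, 0), (0, 0), (0, 0)], [(0, 0), (0, 0), (0, 0), (1, 0), (0, 0)], [(0, 0), (0, 0), (0, 0), (0, 0), (1, 0)], [(0, 0), (0, 0), (1, 0), (0, 0), (0, 0)], [(0, 0), (0, 0), (1, 0), (0, 0), (1, 0)], [(0, 0), (0, 0), (0, 0), (1, 0), (0, 0)], [(0, 0), (0, 0), (0, 0), (0, 0), (1, 0)], [(0, 0), (0, 0), (0, 0), (0, 0), (0, 0)], [(0, 0), (0, 0), (0, 0), (1, 0), (-1, 0)], [(0, 0), (0, 0), (0, 0), (1, 0), (0, 0)], [(0, 0), (0, 0), (0, 0), (0, 0), (1, 0)], [(0, 0), (0, 0), (1, 0), (0, 0), (-1, 0)], [(0, 0), (0, 0), (1, 0), (0, 0), (0, 0)], [(0, 0), (0, 0), (1, 0), (0, 0), (0, 0)], [(0, 0), (0, 0), (0, 0), (1, 0),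 (0, 0)], [(0, 0), (0, 0), (0, 0), (0, 0), (1, 0)], [(0, 0), (0, 0), (0, 0), (0, 0), (1, 0)], [(0, 0), (0, 0), (0, 0), (1, 0), (1, 0)], [(0, 0), (0, 0), (0, 0), (0, 0), (1, 0)], [(0, 0), (0, 0), (1, 0), (0, 0), (0, 0)]],
    [[(0, 0), (1, 0), (0, 0), (0, 0), (0, 0)], [(0, 0), (0, 0), (0, 0), (0, 0), (1, 0)], [(0, 0), (1, 0), (0, 0), (0, 0), (0, 0)], [(0, 0), (0, 0), (0, 0), (0, 0), (1, 0)], [(0, 0), (0, 0), (1, 0), (0, 0), (0, 0)], [(0, 0), (0, 0), (0, 0), (0, 0), (1, 0)], [(0, 0), (0, 0), (1, 0), (0, 0), (0, 0)], [(0, 0), (0, 0), (1, 0), (0, 0), (0, 0)], [(0, 0), (0, 0), (0, 0), (1, 0), (0, 0)], [(0, 0), (0, 0), (0, 0), (0, 0), (1, 0)], [(0, 0), (0, 0), (1, 0), (1, 0), (0, 0)], [(0, 0), (0, 0), (0, 0), (1, 0), (0, 0)], [(0, 0), (0, 0), (0, 0), (1, 0), (-1, 0)], [(0, 0), (0, 0), (0, 0), (0, 0), (0, 0)], [(0, 0), (0, 0), (0, 0), (0, 0), (1, 0)], [(0, 0), (0, 0), (1, 0), (0, 0), (0, 1)], [(0, 0), (0, 0), (0, 0), (1, 0), (0, 0)], [(0, 0), (0, 0), (0, 0), (0, 0), (1, 0)], [(0, 0), (0, 0), (1, 0), (0, 0), (0, 0)], [(0, 0), (0, 0), (1, 0),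 (0, 0), (0, 0)], [(0, 0), (0, 0), (0, 0), (1, 0), (0, 0)], [(0, 0), (0, 0), (0, 0), (1, 0), (1, 0)], [(0, 0), (0, 0), (0, 0), (0, 0), (1, 0)], [(0, 0), (0, 0), (1, 0), (0, 0), (0, 0)], [(0, 0), (0, 0), (0, 0), (0, 0), (1, 0)]],
    [[(0, 0), (0, 0), (0, 0), (0, 0), (1, 0)], [(0, 0), (0, 0), (0, 0), (1, 0), (0, 0)], [(0, 0), (0, 0), (0, 0), (0, 0), (1, 0)], [(0, 0), (1, 0), (0, 0), (0, 0), (0, 0)], [(0, 0), (0, 0), (0, 0), (0, 0), (1, 0)], [(0, 0), (0, 0), (1, 0), (0, 0), (0, 0)], [(0, 0), (0, 0), (1, 0), (0, 0), (0, 0)], [(0, 0), (0, 0), (0, 0), (1, 0), (0, 0)], [(0, 0), (0, 0), (0, 0), (0, 0), (1, 0)], [(0, 0), (0, 0), (0, 0), (1, 0), (0, 0)], [(0, 0), (0, 0), (0, 0), (0, 0), (1, 0)], [(0, 0), (0, 0), (1, 0), (0, 0), (0, 1)], [(0, 0), (0, 0), (0, 0), (1, 0), (0, 0)], [(0, 0), (0, 0), (0, 0), (0, 0), (1, 0)], [(0, 0), (0, 0), (0, 0), (0, 0), (0, 0)], [(0, 0), (0, 0), (0, 0), (1, 0), (0, 0)], [(0, 0), (0, 0), (0, 0), (0, 0), (1, 0)], [(0, 0), (0, 0), (0, 0), (1, 0), (0, 0)], [(0, 0), (0, 0), (1, 0), (0, 0), (0, 0)], [(0, 0), (0, 0), (0,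 0), (0, 0), (1, 0)], [(0, 0), (0, 0), (1, 0), (0, 0), (0, 0)], [(0, 0), (0, 0), (1, 0), (0, 0), (0, 1)], [(0, 0), (0, 0), (1, 0), (0, 1), (0, 0)], [(0, 0), (0, 0), (1, 0), (0, 0), (0, 0)], [(0, 0), (0, 0), (1, 0), (0, 0), (0, 0)]],
    [[(0, 0), (1, 0), (0, 0), (0, 0), (0, 0)], [(0, 0), (1, 0), (0, 0), (0, 0), (0, 0)], [(0, 0), (0, 0), (0, 0), (1, 0), (0, 0)], [(0, 0), (0, 0), (0, 0), (1, 0), (0, 0)], [(0, 0), (1, 0), (0, 0), (0, 0), (0, 0)], [(0, 0), (1, 0), (0, 0), (0, 0), (0, 0)], [(0, 0), (0, 0), (0, 0), (0, 0), (1, 0)], [(0, 0), (1, 0), (-1, 0), (0, 0), (0, 0)], [(0, 0), (0, 0), (0, 0), (1, 0), (-1, 0)], [(0, 0), (0, 0), (1, 0), (0, 0), (0, 0)], [(0, 0), (0, 0), (0, 0), (1, 0), (0, 0)], [(0, 0), (0, 0), (1, 0), (0, 0), (0, 0)], [(0, 0), (0, 0), (0, 0), (0, 0), (1, 0)], [(0, 0), (0, 0), (1, 0), (0, 0), (0, 1)], [(0, 0), (0, 0), (0, 0), (1, 0), (0, 0)], [(0, 0), (0, 0), (0, 0), (0, 0), (0, 0)], [(0, 0), (0, 0), (0, 0), (1, 0), (-1, 0)], [(0, 0), (0, 0), (1, 0), (0, 0), (0, -1)], [(0, 0), (0, 0), (0, 0), (0, 0), (1, 0)], [(0, 0), (0,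 0), (0, 0), (1, 0), (0, 0)], [(0, 0), (0, 0), (1, 0), (1, 0), (0, 0)], [(0, 0), (0, 0), (0, 0), (1, 0), (0, 0)], [(0, 0), (0, 0), (1, 0), (0, 0), (0, 0)], [(0, 0), (0, 0), (0, 0), (1, 0), (0, 0)], [(0, 0), (0, 0), (1, 0), (0, 0), (0, -1)]],
    [[(0, 0), (1, 0), (0, 0), (0, 0), (0, 0)], [(0, 0), (0, 0), (0, 0), (0, 0), (1, 0)], [(0, 0), (1, 0), (0, 0), (0, 0), (0, 0)], [(0, 0), (0, 0), (0, 0), (0, 0), (1, 0)], [(0, 0), (1, 0), (0, 0), (0, 0), (0, 0)], [(0, 0), (0, 0), (0, 0), (0, 0), (1, 0)], [(0, 0), (1, 0), (0, 0), (0, 0), (0, 0)], [(0, 0), (0, 0), (0, 0), (1, 0), (-1, 0)], [(0, 0), (1, 0), (-1, 0), (0, 0), (0, 0)], [(0, 0), (0, 0), (0, 0), (0, 0), (1, 0)], [(0, 0), (0, 0), (1, 0), (0, 0), (0, 0)], [(0, 0), (0, 0), (1, 0), (0, 0), (0, 0)], [(0, 0), (0, 0), (1, 0), (0, 0), (-1, 0)], [(0, 0), (0, 0), (0, 0), (1, 0), (0, 0)], [(0, 0), (0, 0), (0, 0), (0, 0), (1, 0)], [(0, 0), (0, 0), (0, 0), (1, 0), (-1, 0)], [(0, 0), (0, 0), (0, 0), (0, 0), (0, 0)], [(0, 0), (0, 0), (0, 0), (0, 0), (1, 0)], [(0, 0), (0, 0), (0, 0), (1, 0), (0, 0)], [(0,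 0), (0, 0), (1, 0), (0, -1), (0, 0)], [(0, 0), (0, 0), (1, 0), (0, 0), (1, 0)], [(0, 0), (0, 0), (1, 0), (0, 0), (0, 0)], [(0, 0), (0, 0), (0, 0), (0, 0), (1, 0)], [(0, 0), (0, 0), (1, 0), (0, 0), (1, 0)], [(0, 0), (0, 0), (0, 0), (0, 0), (1, 0)]],
    [[(0, 0), (0, 0), (0, 0), (0, 0), (1, 0)], [(0, 0), (0, 0), (1, 0), (0, 0), (0, 0)], [(0, 0), (0, 0), (0, 0), (0, 0), (1, 0)], [(0, 0), (0, 0), (0, 0), (1, 0), (0, 0)], [(0, 0), (0, 0), (0, 0), (0, 0), (1, 0)], [(0, 0), (1, 0), (0, 0), (0, 0), (0, 0)], [(0, 0), (0, 0), (0, 0), (1, 0), (0, 0)], [(0, 0), (1, 0), (0, 0), (0, 0), (0, -1)], [(0, 0), (0, 0), (0, 0), (0, 0), (1, 0)], [(0, 0), (1, 0), (0, -1), (0, 0), (0, 0)], [(0, 0), (0, 0), (0, 0), (0, 0), (1, 0)], [(0, 0), (0, 0), (0, 0), (1, 0), (0, 1)], [(0, 0), (0, 0), (1, 0), (0, 0), (0, 0)], [(0, 0), (0, 0), (0, 0), (0, 0), (1, 0)], [(0, 0), (0, 0), (0, 0), (1, 0), (0, 0)], [(0, 0), (0, 0), (1, 0), (0, 0), (0, -1)], [(0, 0), (0, 0), (0, 0), (0, 0), (1, 0)], [(0, 0), (0, 0), (0, 0), (0, 0), (0, 0)], [(0, 0), (0, 0), (0, 0), (1, 0), (0, -1)],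 [(0, 0), (0, 0), (0, 0), (0, 0), (1, 0)], [(0, 0), (0, 0), (0, 0), (1, 0), (0, 1)], [(0, 0), (0, 0), (0, 0), (1, 0), (0, 0)], [(0, 0), (0, 0), (1, 0), (0, -1), (0, 0)], [(0, 0), (0, 0), (0, 0), (1, 0), (0, 0)], [(0, 0), (1, 0), (0, 0), (0, -1), (0, 0)]],
    [[(0, 0), (0, 0), (1, 0), (0, 0), (0, 0)], [(0, 0), (0, 0), (1, 0), (0, 0), (0, 0)], [(0, 0), (0, 0), (1, 0), (0, 0), (0, 0)], [(0, 0), (0, 0), (1, 0), (0, 0), (0, 0)], [(0, 0), (1, 0), (0, 0), (0, 0), (0, 0)], [(0, 0), (1, 0), (0, 0), (0, 0), (0, 0)], [(0, 0), (1, 0), (0, 0), (0, 0), (0, 0)], [(0, 0), (0, 0), (0, 0), (0, 0), (1, 0)], [(0, 0), (0, 0), (0, 0), (1, 0), (0, 0)], [(0, 0), (0, 0), (0, 0), (1, 0), (0, -1)], [(0, 0), (0, 0), (0, 0), (1, 0), (0, 1)], [(0, 0), (0, 0), (0, 0), (0, 0), (1, 0)], [(0, 0), (0, 0), (1, 0), (0, 0), (0, 0)], [(0, 0), (0, 0), (1, 0), (0, 0), (0, 0)], [(0, 0), (0, 0), (1, 0), (0, 0), (0, 0)], [(0, 0), (0, 0), (0, 0), (0, 0), (1, 0)], [(0, 0), (0, 0), (0, 0), (1, 0), (0, 0)], [(0, 0), (0, 0), (0, 0), (1, 0), (0, -1)], [(0, 0), (0, 0), (0, 0), (0, 0), (0,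 0)], [(0, 0), (0, 0), (0, 0), (1, 0), (0, 1)], [(0, 0), (0, 0), (0, 0), (0, 0), (1, 0)], [(0, 0), (0, 0), (0, 0), (0, 0), (1, 0)], [(0, 0), (0, 0), (0, 0), (1, 0), (0, 0)], [(0, 0), (0, 0), (0, 0), (0, 0), (1, 0)], [(0, 0), (0, 0), (0, 0), (1, 0), (0, 0)]],
    [[(0, 0), (0, 0), (0, 0), (1, 0), (0, 0)], [(0, 0), (0, 0), (0, 0), (0, 0), (1, 0)], [(0, 0), (0, 0), (1, 0), (0, 0), (0, 0)], [(0, 0), (0, 0), (0, 0), (0, 0), (1, 0)], [(0, 0), (0, 0), (0, 0), (1, 0), (0, 0)], [(0, 0), (0, 0), (0, 0), (0, 0), (1, 0)], [(0, 0), (1, 0), (0, 0), (0, 0), (0, 0)], [(0, 0), (0, 0), (0, 0), (1, 0), (0, 0)], [(0, 0), (1, 0), (0, 0), (0, -1), (0, 0)], [(0, 0), (0, 0), (0, 0), (0, 0), (1, 0)], [(0, 0), (1, 0), (0, -1), (0, 0), (0, 0)], [(0, 0), (0, 0), (0, 0), (1, 0), (0, -1)], [(0, 0), (0, 0), (0, 0), (1, 0), (0, 0)], [(0, 0), (0, 0), (1, 0), (0, 0), (0, 0)], [(0, 0), (0, 0), (0, 0), (0, 0), (1, 0)], [(0, 0), (0, 0), (0, 0), (1, 0), (0, 0)], [(0, 0), (0, 0), (1, 0), (0, -1), (0, 0)], [(0, 0), (0, 0), (0, 0), (0, 0), (1, 0)], [(0, 0), (0, 0), (0, 0), (1, 0),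 (0, 1)], [(0, 0), (0, 0), (0, 0), (0, 0), (0, 0)], [(0, 0), (0, 0), (0, 0), (1, 0), (0, -1)], [(0, 0), (0, 0), (1, 0), (0, 0), (0, -1)], [(0, 0), (0, 0), (0, 0), (0, 0), (1, 0)], [(0, 0), (1, 0), (0, 0), (0, 0), (0, -1)], [(0, 0), (0, 0), (0, 0), (0, 0), (1, 0)]],
    [[(0, 0), (0, 0), (1, 0), (0, 0), (0, 0)], [(0, 0), (0, 0), (1, 0), (0, 0), (0, 0)], [(0, 0), (0, 0), (1, 0), (0, 0), (0, 0)], [(0, 0), (0, 0), (1, 0), (0, 0), (0, 0)], [(0, 0), (1, 0), (0, 0), (0, 0), (0, 0)], [(0, 0), (0, 0), (0, 0), (1, 0), (0, 0)], [(0, 0), (0, 0), (0, 0), (0, 0), (1, 0)], [(0, 0), (1, 0), (0, 0), (1, 0), (0, 0)], [(0, 0), (1, 0), (0, 0), (0, 0), (1, 0)], [(0, 0), (0, 0), (0, 0), (1, 0), (0, 1)], [(0, 0), (0, 0), (0, 0), (1, 0), (0, -1)], [(0, 0), (1, 0), (0, -1), (0, 0), (0, 0)], [(0, 0), (0, 0), (0, 0), (0, 0), (1, 0)], [(0, 0), (0, 0), (0, 0), (1, 0), (0, 0)], [(0, 0), (0, 0), (1, 0), (0, 0), (0, 0)], [(0, 0), (0, 0), (1, 0), (1, 0), (0, 0)], [(0, 0), (0, 0), (1, 0), (0, 0), (1, 0)], [(0, 0), (0, 0), (0, 0), (1, 0), (0, 1)], [(0, 0), (0, 0), (0, 0), (0,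 0), (1, 0)], [(0, 0), (0, 0), (0, 0), (1, 0), (0, -1)], [(0, 0), (0, 0), (0, 0), (0, 0), (0, 0)], [(0, 0), (0, 0), (1, 0), (-1, 0), (0, 0)], [(0, 0), (0, 0), (1, 0), (0, 0), (-1, 0)], [(0, 0), (1, 0), (0, 0), (-1, 0), (0, 0)], [(0, 0), (1, 0), (0, 0), (0, 0), (-1, 0)]],
    [[(0, 0), (0, 0), (0, 0), (1, 0), (0, 0)], [(0, 0), (0, 0), (0, 0), (1, 0), (0, 0)], [(0, 0), (1, 0), (0, 0), (0, 0), (0, 0)], [(0, 0), (1, 0), (0, 0), (0, 0), (0, 0)], [(0, 0), (0, 0), (0, 0), (1, 0), (0, 0)], [(0, 0), (1, 0), (0, 0), (0, 0), (0, 0)], [(0, 0), (0, 0), (0, 0), (0, 0), (1, 0)], [(0, 0), (0, 0), (0, 0), (1, 0), (0, 0)], [(0, 0), (0, 0), (1, 0), (0, 0), (0, -1)], [(0, 0), (0, 0), (0, 0), (1, 0), (0, 0)], [(0, 0), (1, 0), (0, 0), (0, 0), (1, 0)], [(0, 0), (1, 0), (0, 0), (0, -1), (0, 0)], [(0, 0), (0, 0), (0, 0), (0, 0), (1, 0)], [(0, 0), (0, 0), (0, 0), (1, 0), (1, 0)], [(0, 0), (0, 0), (1, 0), (0, 0), (0, 1)], [(0, 0), (0, 0), (0, 0), (1, 0), (0, 0)], [(0, 0), (0, 0), (1, 0), (0, 0), (0, 0)], [(0, 0), (0, 0), (0, 0), (1, 0), (0, 0)], [(0, 0), (0, 0), (0,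 0), (0, 0), (1, 0)], [(0, 0), (0, 0), (1, 0), (0, 0), (0, -1)], [(0, 0), (0, 0), (1, 0), (-1, 0), (0, 0)], [(0, 0), (0, 0), (0, 0), (0, 0), (0, 0)], [(0, 0), (0, 0), (0, 0), (1, 0), (-1, 0)], [(0, 0), (1, 0), (-1, 0), (0, 0), (0, 0)], [(0, 0), (0, 0), (0, 0), (1, 0), (-1, 0)]],
    [[(0, 0), (0, 0), (0, 0), (0, 0), (1, 0)], [(0, 0), (1, 0), (0, 0), (0, 0), (0, 0)], [(0, 0), (0, 0), (0, 0), (0, 0), (1, 0)], [(0, 0), (1, 0), (0, 0), (0, 0), (0, 0)], [(0, 0), (0, 0), (0, 0), (0, 0), (1, 0)], [(0, 0), (0, 0), (0, 0), (1, 0), (0, 0)], [(0, 0), (1, 0), (0, 0), (0, 0), (0, 0)], [(0, 0), (0, 0), (1, 0), (0, 0), (-1, 0)], [(0, 0), (0, 0), (0, 0), (0, 0), (1, 0)], [(0, 0), (1, 0), (0, 0), (1, 0), (0, 0)], [(0, 0), (0, 0), (0, 0), (0, 0), (1, 0)], [(0, 0), (1, 0), (0, 0), (0, 0), (0, -1)], [(0, 0), (0, 0), (0, 0), (1, 0), (1, 0)], [(0, 0), (0, 0), (0, 0), (0, 0), (1, 0)], [(0, 0), (0, 0), (1, 0), (0, 1), (0, 0)], [(0, 0), (0, 0), (1, 0), (0, 0), (0, 0)], [(0, 0), (0, 0), (0, 0), (0, 0), (1, 0)], [(0, 0), (0, 0), (1, 0), (0, -1), (0, 0)], [(0, 0),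 (0, 0), (0, 0), (1, 0), (0, 0)], [(0, 0), (0, 0), (0, 0), (0, 0), (1, 0)], [(0, 0), (0, 0), (1, 0), (0, 0), (-1, 0)], [(0, 0), (0, 0), (0, 0), (1, 0), (-1, 0)], [(0, 0), (0, 0), (0, 0), (0, 0), (0, 0)], [(0, 0), (0, 0), (0, 0), (1, 0), (-1, 0)], [(0, 0), (1, 0), (-1, 0), (0, 0), (0, 0)]],
    [[(0, 0), (0, 0), (0, 0), (1, 0), (0, 0)], [(0, 0), (0, 0), (0, 0), (1, 0), (0, 0)], [(0, 0), (0, 0), (1, 0), (0, 0), (0, 0)], [(0, 0), (0, 0), (1, 0), (0, 0), (0, 0)], [(0, 0), (0, 0), (0, 0), (1, 0), (0, 0)], [(0, 0), (1, 0), (0, 0), (0, 0), (0, 1)], [(0, 0), (0, 0), (0, 0), (0, 0), (1, 0)], [(0, 0), (0, 0), (0, 0), (1, 0), (0, 0)], [(0, 0), (1, 0), (0, 0), (0, 0), (0, 0)], [(0, 0), (0, 0), (0, 0), (1, 0), (0, 0)], [(0, 0), (1, 0), (0, 0), (0, 0), (0, 0)], [(0, 0), (1, 0), (0, 0), (0, 0), (0, 0)], [(0, 0), (0, 0), (0, 0), (0, 0), (1, 0)], [(0, 0), (0, 0), (1, 0), (0, 0), (0, 0)], [(0, 0), (0, 0), (1, 0), (0, 0), (0, 0)], [(0, 0), (0, 0), (0, 0), (1, 0), (0, 0)], [(0, 0), (0, 0), (1, 0), (0, 0), (1, 0)], [(0, 0), (0, 0), (0, 0), (1, 0), (0, 0)],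 [(0, 0), (0, 0), (0, 0), (0, 0), (1, 0)], [(0, 0), (1, 0), (0, 0), (0, 0), (0, -1)], [(0, 0), (1, 0), (0, 0), (-1, 0), (0, 0)], [(0, 0), (1, 0), (-1, 0), (0, 0), (0, 0)], [(0, 0), (0, 0), (0, 0), (1, 0), (-1, 0)], [(0, 0), (0, 0), (0, 0), (0, 0), (0, 0)], [(0, 0), (0, 0), (0, 0), (1, 0), (-1, 0)]],
    [[(0, 0), (0, 0), (0, 0), (0, 0), (1, 0)], [(0, 0), (0, 0), (1, 0), (0, 0), (0, 0)], [(0, 0), (0, 0), (0, 0), (0, 0), (1, 0)], [(0, 0), (0, 0), (1, 0), (0, 0), (0, 0)], [(0, 0), (0, 0), (0, 0), (0, 0), (1, 0)], [(0, 0), (0, 0), (0, 0), (1, 0), (0, 0)], [(0, 0), (1, 0), (0, 0), (0, 0), (1, 0)], [(0, 0), (1, 0), (0, 0), (0, 0), (0, 0)], [(0, 0), (0, 0), (0, 0), (0, 0), (1, 0)], [(0, 0), (1, 0), (0, 0), (0, 0), (0, 0)], [(0, 0), (0, 0), (0, 0), (0, 0), (1, 0)], [(0, 0), (1, 0), (0, 0), (0, 0), (0, 0)], [(0, 0), (0, 0), (1, 0), (0, 0), (0, 0)], [(0, 0), (0, 0), (0, 0), (0, 0), (1, 0)], [(0, 0), (0, 0), (1, 0), (0, 0), (0, 0)], [(0, 0), (0, 0), (1, 0), (0, 0), (0, -1)], [(0, 0), (0, 0), (0, 0), (0, 0), (1, 0)], [(0, 0), (1, 0), (0, 0), (0, -1),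 (0, 0)], [(0, 0), (0, 0), (0, 0), (1, 0), (0, 0)], [(0, 0), (0, 0), (0, 0), (0, 0), (1, 0)], [(0, 0), (1, 0), (0, 0), (0, 0), (-1, 0)], [(0, 0), (0, 0), (0, 0), (1, 0), (-1, 0)], [(0, 0), (1, 0), (-1, 0), (0, 0), (0, 0)], [(0, 0), (0, 0), (0, 0), (1, 0), (-1, 0)], [(0, 0), (0, 0), (0, 0), (0, 0), (0, 0)]]]"

lemma gauss_family_certificate_4: "gauss_family_certificate 4 4 family_4 witnesses_4"
  unfolding family_4_def witnesses_4_def by code_simp

lemma gauss_family_certificate_5: "gauss_family_certificate 5 5 family_5 witnesses_5"
  unfolding family_5_def witnesses_5_def by code_simp

lemma gauss_square_family_k_less:
  fixes M :: "'l measure" and mu :: "'d::finite cvec \<Rightarrow> 'l \<Rightarrow> real" and k :: real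
  assumes m: "onto_model_reproducing M mu xi" and d: "CARD('d) \<ge> 3"
    and bound: "\<And>psi phi. pure_state psi \<Longrightarrow> pure_state phi \<Longrightarrow>
                  omega_C M (mu psi) (mu phi) \<ge> k * omega_Q psi phi"
    and cert: "gauss_family_certificate CARD('d) (int CARD('d)) L W"
    and size: "length L = CARD('d)\<^sup>2"
  shows "k < 2 / real CARD('d)"
proof -
  have "k * ((real CARD('d))\<^sup>2 * (1 - sqrt (1 - 1 / real CARD('d)))) \<le> 1"
    using gauss_family_k_bound[OF m d bound _ cert] d size by simp
  then have "k < 2 * real CARD('d) / (real CARD('d))\<^sup>2"
    using d by (intro k_less_of_family_size) auto
  then show ?thesis
    by (simp add: power2_eq_square)
qed

theorem theorem2:
  fixes M :: "'l measure"
    and mu :: "complex ^ 'd::finite \<Rightarrow> 'l \<Rightarrow> real"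
    and xi :: "(complex ^ 'd ^ 'd) set \<Rightarrow> complex ^ 'd ^ 'd \<Rightarrow> 'l \<Rightarrow> real"
    and k :: real
  assumes d: "CARD('d) \<ge> 4"
    and model: "onto_model_reproducing M mu xi"
    and bound: "\<And>psi phi. pure_state psi \<Longrightarrow> pure_state phi \<Longrightarrow>
                  omega_C M (mu psi) (mu phi) \<ge> k * omega_Q psi phi"
  shows "k < 4 / (real CARD('d) - 1) \<and> (primepow CARD('d) \<longrightarrow> k < 2 / real CARD('d))"
proof -
  have d3: "CARD('d) \<ge> 3"
    using d by simp
  have sign: "k < 4 * real CARD('d) / 2 ^ CARD('d)"
    by (rule sign_family_k_bound[OF model d3 bound])
  have "real (CARD('d) * (CARD('d) - 1)) < real (2 ^ CARD('d))"
    using mult_pred_less_power_two[OF d] by (simp only: of_nat_less_iff)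
  then have "real CARD('d) * (real CARD('d) - 1) < 2 ^ CARD('d)"
    using d by (simp add: of_nat_diff)
  then have "4 * real CARD('d) / 2 ^ CARD('d) \<le> 4 / (real CARD('d) - 1)"
    using d by (simp add: of_nat_diff field_simps)
  moreover have "k < 2 / real CARD('d)" if pp: "primepow CARD('d)"
  proof -
    have "CARD('d) \<noteq> 6"
      using pp not_primepow_6 by metis
    then consider "CARD('d) = 4" | "CARD('d) = 5" | "CARD('d) \<ge> 7"
      using d by linarith
    then show ?thesis
    proof cases
      case 1
      moreover have "length family_4 = 16"
        by (simp add: family_4_def)
      ultimately show ?thesis
        using gauss_square_family_k_less[OF model d3 bound, of family_4 witnesses_4]
          gauss_family_certificate_4 by simp
    next
      case 2
      moreover have "length family_5 = 25"
        by (simp add: family_5_def)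
      ultimately show ?thesis
        using gauss_square_family_k_less[OF model d3 bound, of family_5 witnesses_5]
          gauss_family_certificate_5 by simp
    next
      case 3
      have "real (2 * CARD('d)\<^sup>2) < real (2 ^ CARD('d))"
        using double_square_less_power_two[OF 3] by (simp only: of_nat_less_iff)
      then have "4 * real CARD('d) / 2 ^ CARD('d) \<le> 2 / real CARD('d)"
        using d by (simp add: field_simps power2_eq_square)
      with sign show ?thesis by simp
    qed
  qed
  ultimately show ?thesis
    using sign by simp
qed

end
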